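(* Let $\mathbb P$ be a Bernoulli measure on $\partial\mathcal M$, let $V:\partial\mathcal M\to\overline{\mathcal M}$ be an AST, and let $\psi:\partial\mathcal M\to\mathbb R$ be $\mathcal F$-measurable and either non-negative or $\mathbb P$-integrable. Extend $\psi\circ\theta_V$ (defined on $\{|\xi_V|<\infty\}$) by $\psi\circ\theta_V=0$ on $\{|\xi_V|=\infty\}$. Then $\mathbb E(\psi\circ\theta_V\mid\mathcal F_V)=\mathbb E(\psi)$, $\mathbb P$-almost surely on $\{|\xi_V|<\infty\}$; equivalently, $\mathbb E(\mathbf 1_{\{V\in\mathcal M\}}\,\psi\circ\theta_V\mid\mathcal F_V)=\mathbf 1_{\{V\in\mathcal M\}}\mathbb E(\psi)$ $\mathbb P$-a.s.
   Context: Let $\Sigma$ be a finite set with at least two elements and $I\subseteq\Sigma\times\Sigma$ a symmetric irreflexive relation such that the graph $(\Sigma,D)$, $D=(\Sigma\times\Sigma)\setminus I$, is connected. The heap monoid $\mathcal M=\mathcal M(\Sigma,I)$ is the quotient of the free monoid $\Sigma^*$ by the smallest congruence containing all pairs $(ab,ba)$ with $(a,b)\in I$; its elements are heaps, $\cdot$ denotes concatenation and $0$ the empty heap. For $x\in\mathcal M$, $|x|$ is the length of any representative word. Write $x\le y$ if $y=x\cdot z$ for some $z\in\mathcal M$. A clique is a heap $a_1\cdots a_k$ of distinct pairwise independent pieces (possibly empty); $\mathfrak C$ is the set of nonempty cliques; $\gamma\to\gamma'$ means every piece of $\gamma'$ is dependent (not in $I$) on some piece of $\gamma$. Every nonempty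 heap has a unique Cartier–Foata decomposition $x=\gamma_1\cdots\gamma_n$, $\gamma_i\in\mathfrak C$, $\gamma_i\to\gamma_{i+1}$. An infinite heap is an infinite sequence $\xi=(\gamma_n)_{n\ge1}$ of nonempty cliques with $\gamma_n\to\gamma_{n+1}$; their set is the boundary $\partial\mathcal M$, $\overline{\mathcal M}=\mathcal M\cup\partial\mathcal M$ (a finite heap identified with its Cartier–Foata sequence padded with empty cliques), ordered by $\xi\le\xi'$ iff $\gamma_1\cdots\gamma_n\le\gamma'_1\cdots\gamma'_n$ for all $n$; nondecreasing sequences have least upper bounds $\bigvee$. Set $|\xi|=\infty$ for $\xi\in\partial\mathcal M$. For $x\in\mathcal M$, ${\uparrow}x=\{\xi\in\partial\mathcal M: x\le\xi\}$, and $\mathcal F$ is the $\sigma$-algebra on $\partial\mathcal M$ generated by these cylinders. A Bernoulli measure is a probability $\mathbb P$ on $(\partial\mathcal M,\mathcal F)$ with $\mathbb P({\uparrow}(x\cdot y))=\mathbb P({\uparrow}x)\mathbb P({\uparrow}y)$ and $\mathbb P({\uparrow}x)>0$ for all $x,y\in\mathcal M$; $\mathbb E$ denotes expectation under $\mathbb P$. An AST is a map $V:\partial\mathcal M\to\overline{\mathcal M}$, $\xi\mapsto\xi_V$, with (i) $\xi_V\le\xi$ and (ii) if $|\xi_V|<\infty$ and $\xi_V\le\xi'$ then $\xi'_V=\xi_V$. For $x\in\mathcal M$ and $\xi=(\gamma_n)\in\partial\mathcal M$, $x\cdot\xi=\bigvee_n x\cdot\gamma_1\cdots\gamma_n\in\partial\mathcal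 M$; $\xi\mapsto x\cdot\xi$ is a bijection $\partial\mathcal M\to{\uparrow}x$ whose inverse is denoted $\xi\mapsto\xi-x$. The shift of $V$ is $\theta_V(\xi)=\xi-\xi_V$, defined on $\{|\xi_V|<\infty\}$. $\mathcal F_V$ is the $\sigma$-algebra generated by the cylinders ${\uparrow}x$ for $x$ ranging over the set of finite values (values in $\mathcal M$) taken by $V$. *)

theory Defs
  imports "HOL-Probability.Probability"
begin

text \<open>Alphabet: a finite type 'a (the set Sigma is UNIV). I is the independence relation.\<close>

type_synonym 'a word = "'a list"
type_synonym 'a heap = "'a list set"           \<comment> \<open>a heap = trace-equivalence class of words\<close>
type_synonym 'a gheap = "nat \<Rightarrow> 'a set"      \<comment> \<open>sequence of cliques (Cartier-Foata form, 0-indexed)\<close>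

definition swap1 :: "('a \<times> 'a) set \<Rightarrow> 'a word \<Rightarrow> 'a word \<Rightarrow> bool" where
  "swap1 I u v \<longleftrightarrow> (\<exists>p q a b. (a, b) \<in> I \<and> u = p @ [a, b] @ q \<and> v = p @ [b, a] @ q)"

definition heap :: "('a \<times> 'a) set \<Rightarrow> 'a word \<Rightarrow> 'a heap" where
  "heap I w = {v. (swap1 I)\<^sup>*\<^sup>* w v}"

definition heaps :: "('a \<times> 'a) set \<Rightarrow> 'a heap set" where
  "heaps I = range (heap I)"

definition hmul :: "('a \<times> 'a) set \<Rightarrow> 'a heap \<Rightarrow> 'a heap \<Rightarrow> 'a heap" where
  "hmul I x y = heap I ((SOME u. u \<in> x) @ (SOME v. v \<in> y))"

definition hle :: "('a \<times> 'a) set \<Rightarrow> 'a heap \<Rightarrow> 'a heap \<Rightarrow> bool" where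
  "hle I x y \<longleftrightarrow> (\<exists>z \<in> heaps I. y = hmul I x z)"

definition clique :: "('a \<times> 'a) set \<Rightarrow> 'a set \<Rightarrow> bool" where
  "clique I c \<longleftrightarrow> (\<forall>a\<in>c. \<forall>b\<in>c. a \<noteq> b \<longrightarrow> (a, b) \<in> I)"

definition arrow :: "('a \<times> 'a) set \<Rightarrow> 'a set \<Rightarrow> 'a set \<Rightarrow> bool" where
  "arrow I c c' \<longleftrightarrow> (\<forall>b\<in>c'. \<exists>a\<in>c. (a, b) \<notin> I)"

text \<open>Generalized heaps (Mbar): Cartier-Foata sequences, finite ones padded with empty cliques.
  (arrow with an empty source and nonempty target fails, so padding is only at the end.)\<close>
definition Mbar :: "('a \<times> 'a) set \<Rightarrow> 'a gheap set" where
  "Mbar I = {\<xi>. \<forall>n. clique I (\<xi> n) \<and> arrow I (\<xi> n) (\<xi> (Suc n))}"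

definition boundary :: "('a \<times> 'a) set \<Rightarrow> 'a gheap set" where
  "boundary I = {\<xi> \<in> Mbar I. \<forall>n. \<xi> n \<noteq> {}}"

definition Mfin :: "('a \<times> 'a) set \<Rightarrow> 'a gheap set" where
  "Mfin I = {\<xi> \<in> Mbar I. \<exists>n. \<xi> n = {}}"

definition clique_word :: "'a set \<Rightarrow> 'a word" where
  "clique_word c = (SOME w. distinct w \<and> set w = c)"

definition pre :: "('a \<times> 'a) set \<Rightarrow> 'a gheap \<Rightarrow> nat \<Rightarrow> 'a heap" where
  "pre I \<xi> n = heap I (concat (map (\<lambda>i. clique_word (\<xi> i)) [0..<n]))"

definition cf :: "('a \<times> 'a) set \<Rightarrow> 'a heap \<Rightarrow> 'a gheap" where
  "cf I x = (THE \<xi>. \<xi> \<in> Mbar I \<and> (\<exists>n. \<xi> n = {} \<and> pre I \<xi> n = x))"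

definition fin :: "('a \<times> 'a) set \<Rightarrow> 'a gheap \<Rightarrow> 'a heap" where
  "fin I \<xi> = pre I \<xi> (LEAST n. \<xi> n = {})"

definition gle :: "('a \<times> 'a) set \<Rightarrow> 'a gheap \<Rightarrow> 'a gheap \<Rightarrow> bool" where
  "gle I \<xi> \<xi>' \<longleftrightarrow> (\<forall>n. hle I (pre I \<xi> n) (pre I \<xi>' n))"

definition glub :: "('a \<times> 'a) set \<Rightarrow> (nat \<Rightarrow> 'a gheap) \<Rightarrow> 'a gheap" where
  "glub I s = (THE \<zeta>. \<zeta> \<in> Mbar I \<and> (\<forall>n. gle I (s n) \<zeta>) \<and>
                  (\<forall>\<zeta>'\<in>Mbar I. (\<forall>n. gle I (s n) \<zeta>') \<longrightarrow> gle I \<zeta> \<zeta>'))"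

definition up :: "('a \<times> 'a) set \<Rightarrow> 'a heap \<Rightarrow> 'a gheap set" where
  "up I x = {\<xi> \<in> boundary I. gle I (cf I x) \<xi>}"

definition act :: "('a \<times> 'a) set \<Rightarrow> 'a heap \<Rightarrow> 'a gheap \<Rightarrow> 'a gheap" where
  "act I x \<xi> = glub I (\<lambda>n. cf I (hmul I x (pre I \<xi> n)))"

definition minus_heap :: "('a \<times> 'a) set \<Rightarrow> 'a gheap \<Rightarrow> 'a heap \<Rightarrow> 'a gheap" where
  "minus_heap I \<xi> x = (THE \<zeta>. \<zeta> \<in> boundary I \<and> act I x \<zeta> = \<xi>)"

definition cyl_space :: "('a \<times> 'a) set \<Rightarrow> 'a gheap measure" where
  "cyl_space I = sigma (boundary I) (up I ` heaps I)"

definition bernoulli :: "('a \<times> 'a) set \<Rightarrow> 'a gheap measure \<Rightarrow> bool" where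
  "bernoulli I P \<longleftrightarrow> prob_space P \<and> space P = boundary I \<and> sets P = sets (cyl_space I) \<and>
     (\<forall>x\<in>heaps I. \<forall>y\<in>heaps I.
        measure P (up I (hmul I x y)) = measure P (up I x) * measure P (up I y)) \<and>
     (\<forall>x\<in>heaps I. measure P (up I x) > 0)"

definition AST :: "('a \<times> 'a) set \<Rightarrow> ('a gheap \<Rightarrow> 'a gheap) \<Rightarrow> bool" where
  "AST I V \<longleftrightarrow> (\<forall>\<xi>\<in>boundary I. V \<xi> \<in> Mbar I \<and> gle I (V \<xi>) \<xi>) \<and>
     (\<forall>\<xi>\<in>boundary I. \<forall>\<xi>'\<in>boundary I.
        V \<xi> \<in> Mfin I \<and> gle I (V \<xi>) \<xi>' \<longrightarrow> V \<xi>' = V \<xi>)"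

definition shift :: "('a \<times> 'a) set \<Rightarrow> ('a gheap \<Rightarrow> 'a gheap) \<Rightarrow> 'a gheap \<Rightarrow> 'a gheap" where
  "shift I V \<xi> = minus_heap I \<xi> (fin I (V \<xi>))"

definition FV :: "('a \<times> 'a) set \<Rightarrow> ('a gheap \<Rightarrow> 'a gheap) \<Rightarrow> 'a gheap measure" where
  "FV I V = sigma (boundary I)
     {up I (fin I (V \<xi>)) | \<xi>. \<xi> \<in> boundary I \<and> V \<xi> \<in> Mfin I}"

definition shifted :: "('a \<times> 'a) set \<Rightarrow> ('a gheap \<Rightarrow> 'a gheap) \<Rightarrow> ('a gheap \<Rightarrow> real) \<Rightarrow> 'a gheap \<Rightarrow> real" where
  "shifted I V \<psi> \<xi> = (if V \<xi> \<in> Mfin I then \<psi> (shift I V \<xi>) else 0)"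

end

theory Submission
  imports Defs
begin

text \<open>A word is encoded by its labelled pieces: each letter is placed one level above the highest
  earlier piece it depends on. Two words represent the same heap iff they have the same labelled
  pieces, and \<open>x \<le> y\<close> iff the pieces of \<open>x\<close> form a downward closed subset of those of \<open>y\<close>.
  Infinite heaps are likewise determined by their labelled pieces; this makes \<open>\<xi> \<mapsto> x \<cdot> \<xi>\<close> a
  bijection of the boundary onto \<open>\<up>x\<close> that maps \<open>\<up>y\<close> onto \<open>\<up>(x \<cdot> y)\<close>. By multiplicativity, the
  image of a Bernoulli measure \<open>P\<close> restricted to \<open>\<up>x\<close> under \<open>\<xi> \<mapsto> \<xi> - x\<close> is \<open>P(\<up>x) \<cdot> P\<close>.
  The finite values of an AST \<open>V\<close> partition \<open>{|\<xi>\<^sub>V| < \<infinity>}\<close> into countably many disjoint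
  cylinders \<open>\<up>x\<close> on which \<open>\<xi>\<^sub>V = x\<close>; they generate \<open>\<F>\<^sub>V\<close>, and on each of them the integral of
  \<open>\<psi> \<circ> \<theta>\<^sub>V\<close> is \<open>P(\<up>x) \<cdot> E \<psi>\<close>, which identifies the conditional expectation.\<close>

section \<open>Conditional expectation with respect to a countable partition\<close>

lemma sigma_sets_insert_empty: "sigma_sets \<Omega> (insert {} G) = sigma_sets \<Omega> G"
proof
  show "sigma_sets \<Omega> (insert {} G) \<subseteq> sigma_sets \<Omega> G"
    by (rule sigma_sets_mono) (auto intro: sigma_sets.Empty sigma_sets.Basic)
  show "sigma_sets \<Omega> G \<subseteq> sigma_sets \<Omega> (insert {} G)"
    by (rule sigma_sets_mono) (auto intro: sigma_sets.Basic)
qed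

lemma sigma_sets_disjoint_atom:
  assumes G: "disjoint G" "G \<subseteq> Pow \<Omega>" and E: "E \<in> G"
  shows "A \<in> sigma_sets \<Omega> G \<Longrightarrow> E \<subseteq> A \<or> E \<inter> A = {}"
proof (induction rule: sigma_sets.induct)
  case (Basic a) then show ?case using G(1) E by (auto simp: disjoint_def)
next
  case (Compl a) then show ?case using G(2) E by blast
qed auto

lemma nn_integral_disjoint_atoms:
  assumes G: "countable G" "disjoint G" "G \<subseteq> sets M"
    and A: "A \<in> sigma_sets (space M) G"
    and h: "h \<in> borel_measurable M" "\<And>x. x \<in> space M \<Longrightarrow> x \<notin> \<Union>G \<Longrightarrow> h x = 0"
  shows "(\<integral>\<^sup>+x\<in>A. h x \<partial>M) = (\<integral>\<^sup>+E. (\<integral>\<^sup>+x\<in>E. h x \<partial>M) \<partial>count_space {E \<in> G. E \<subseteq> A})"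
proof -
  define GA where "GA = {E \<in> G. E \<subseteq> A}"
  have GA: "countable GA" "GA \<subseteq> sets M" "disjoint_family_on (\<lambda>E. E) GA"
    using G unfolding GA_def disjoint_family_on_def disjoint_def by (auto intro: countable_subset)
  have "G \<subseteq> Pow (space M)" using G(3) sets.sets_into_space by blast
  then have "E \<subseteq> A \<or> E \<inter> A = {}" if "E \<in> G" for E
    using sigma_sets_disjoint_atom[OF G(2) _ that A] by blast
  then have AG: "A \<inter> \<Union>G = \<Union>GA" unfolding GA_def by blast
  have "(\<integral>\<^sup>+x\<in>A. h x \<partial>M) = (\<integral>\<^sup>+x\<in>\<Union>GA. h x \<partial>M)"
    using h(2) AG[symmetric] by (intro nn_integral_cong) (auto split: split_indicator)
  also have "\<dots> = emeasure (density M h) (\<Union>GA)"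
    using GA by (simp add: emeasure_density h(1) sets.countable_Union)
  also have "\<dots> = (\<integral>\<^sup>+E. emeasure (density M h) E \<partial>count_space GA)"
    using emeasure_UN_countable[where I=GA and M="density M h" and X="\<lambda>E. E"] GA by auto
  also have "\<dots> = (\<integral>\<^sup>+E. (\<integral>\<^sup>+x\<in>E. h x \<partial>M) \<partial>count_space GA)"
    using GA(2) by (intro nn_integral_cong) (auto simp: emeasure_density h(1))
  finally show ?thesis unfolding GA_def .
qed

lemma (in finite_measure) nn_cond_exp_const_on_atoms:
  assumes F: "subalgebra M F" "sets F = sigma_sets (space M) G"
    and G: "countable G" "disjoint G" "G \<subseteq> sets M"
    and f: "f \<in> borel_measurable M" "\<And>x. x \<in> space M \<Longrightarrow> x \<notin> \<Union>G \<Longrightarrow> f x = 0"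
    and avg: "\<And>E. E \<in> G \<Longrightarrow> (\<integral>\<^sup>+x\<in>E. f x \<partial>M) = c * emeasure M E"
  shows "AE x in M. x \<in> \<Union>G \<longrightarrow> nn_cond_exp M F f x = c"
proof -
  interpret finite_measure_subalgebra M F by unfold_locales (rule F(1))
  define g where "g x = c * indicator (\<Union>G) x" for x
  have "G \<subseteq> sets F" using F(2) by (auto intro: sigma_sets.Basic)
  then have "\<Union>G \<in> sets F" using G(1) by (intro sets.countable_Union) auto
  then have g: "g \<in> borel_measurable F" unfolding g_def by measurable
  then have gM: "g \<in> borel_measurable M" using F(1) measurable_from_subalg by blast
  have "AE x in M. g x = nn_cond_exp M F f x"
  proof (rule nn_cond_exp_charact[OF _ f(1) g])
    fix A assume "A \<in> sets F"
    then have A: "A \<in> sigma_sets (space M) G" using F(2) by simp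
    have g_avg: "(\<integral>\<^sup>+x\<in>E. g x \<partial>M) = c * emeasure M E" if "E \<in> G" for E
      using that G(3) by (subst nn_integral_cmult_indicator[symmetric])
        (auto intro!: nn_integral_cong simp: g_def split: split_indicator)
    have g0: "g x = 0" if "x \<notin> \<Union>G" for x using that by (simp add: g_def)
    have "(\<integral>\<^sup>+x\<in>A. f x \<partial>M) = (\<integral>\<^sup>+E. (\<integral>\<^sup>+x\<in>E. f x \<partial>M) \<partial>count_space {E \<in> G. E \<subseteq> A})"
      by (rule nn_integral_disjoint_atoms[OF G A f])
    also have "\<dots> = (\<integral>\<^sup>+E. (\<integral>\<^sup>+x\<in>E. g x \<partial>M) \<partial>count_space {E \<in> G. E \<subseteq> A})"
      by (rule nn_integral_cong) (simp add: avg g_avg)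
    also have "\<dots> = (\<integral>\<^sup>+x\<in>A. g x \<partial>M)"
      using g0 by (intro nn_integral_disjoint_atoms[OF G A gM, symmetric])
    finally show "(\<integral>\<^sup>+x\<in>A. f x \<partial>M) = (\<integral>\<^sup>+x\<in>A. g x \<partial>M)" .
  qed
  then show ?thesis by eventually_elim (metis g_def indicator_simps(1) mult_1_right)
qed

section \<open>Traces\<close>

locale heap_monoid =
  fixes I :: "('a::finite \<times> 'a) set"
  assumes symI: "sym I" and irrI: "irrefl I"
begin

abbreviation trace_eq where "trace_eq \<equiv> (swap1 I)\<^sup>*\<^sup>*"

lemma indep_sym: "(a, b) \<in> I \<Longrightarrow> (b, a) \<in> I"
  using symI by (auto simp: sym_def)

lemma indep_irrefl[simp]: "(a, a) \<notin> I"
  using irrI by (auto simp: irrefl_def)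

lemma swap1_sym: "swap1 I u v \<Longrightarrow> swap1 I v u"
  unfolding swap1_def using indep_sym by blast

lemma trace_eq_sym: "trace_eq u v \<Longrightarrow> trace_eq v u"
proof (induction rule: rtranclp_induct)
  case base then show ?case by simp
next
  case (step y z) then show ?case
    by (meson converse_rtranclp_into_rtranclp swap1_sym)
qed

lemma swap1_append_context: "swap1 I u v \<Longrightarrow> swap1 I (x @ u @ y) (x @ v @ y)"
  unfolding swap1_def
  by (metis append.assoc)

lemma trace_eq_append_context: "trace_eq u v \<Longrightarrow> trace_eq (x @ u @ y) (x @ v @ y)"
proof (induction rule: rtranclp_induct)
  case base then show ?case by simp
next
  case (step y' z) then show ?case
    by (meson rtranclp.rtrancl_into_rtrancl swap1_append_context)
qed

lemma trace_eq_append: "trace_eq u u' \<Longrightarrow> trace_eq v v' \<Longrightarrow> trace_eq (u @ v) (u' @ v')"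
proof -
  assume a: "trace_eq u u'" "trace_eq v v'"
  have "trace_eq (u @ v) (u' @ v)" using trace_eq_append_context[OF a(1), of "[]" v] by simp
  moreover have "trace_eq (u' @ v) (u' @ v')" using trace_eq_append_context[OF a(2), of u' "[]"] by simp
  ultimately show ?thesis by simp
qed

lemma trace_eq_length: "trace_eq u v \<Longrightarrow> length u = length v"
proof (induction rule: rtranclp_induct)
  case base then show ?case by simp
next
  case (step y z) then show ?case unfolding swap1_def by auto
qed

definition proj2 :: "'a \<Rightarrow> 'a \<Rightarrow> 'a list \<Rightarrow> 'a list" where
  "proj2 a b w = filter (\<lambda>c. c = a \<or> c = b) w"

lemma swap1_proj2: "swap1 I u v \<Longrightarrow> (a, b) \<notin> I \<Longrightarrow> proj2 a b u = proj2 a b v"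
proof -
  assume s: "swap1 I u v" and ab: "(a, b) \<notin> I"
  obtain p q c d where cd: "(c, d) \<in> I" "u = p @ [c, d] @ q" "v = p @ [d, c] @ q"
    using s unfolding swap1_def by blast
  have "c \<noteq> d" using cd(1) by auto
  have "\<not> (c \<in> {a,b} \<and> d \<in> {a,b})"
    using cd(1) ab indep_sym \<open>c \<noteq> d\<close> by auto
  then show ?thesis using cd(2,3) by (auto simp: proj2_def)
qed

lemma trace_eq_proj2: "trace_eq u v \<Longrightarrow> (a, b) \<notin> I \<Longrightarrow> proj2 a b u = proj2 a b v"
proof (induction rule: rtranclp_induct)
  case base then show ?case by simp
next
  case (step y z) then show ?case using swap1_proj2 by metis
qed

lemma trace_eq_snoc_commute: "\<forall>c\<in>set v. (a, c) \<in> I \<Longrightarrow> trace_eq (v @ [a]) (a # v)"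
proof (induction v)
  case Nil then show ?case by simp
next
  case (Cons c v)
  have "swap1 I (c # a # v) (a # c # v)"
    unfolding swap1_def using Cons.prems indep_sym
    by (metis append_Cons append_Nil list.set_intros(1))
  moreover have "trace_eq (c # v @ [a]) (c # a # v)"
    using trace_eq_append_context[OF Cons.IH, of "[c]" "[]"] Cons.prems by simp
  ultimately show ?case by simp
qed

lemma trace_eq_commute: "\<forall>c\<in>set v. (a, c) \<in> I \<Longrightarrow> trace_eq (v @ a # w) (a # v @ w)"
  using trace_eq_append_context[OF trace_eq_snoc_commute, of v a "[]" w] by simp

lemma proj2_first_occurrence:
  "a \<notin> set v1 \<Longrightarrow> c \<in> set v1 \<Longrightarrow> proj2 a c (a # u) \<noteq> proj2 a c (v1 @ a # v2)"
  by (induction v1) (auto simp: proj2_def)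

lemma proj2_trace_eq: "(\<forall>a b. (a, b) \<notin> I \<longrightarrow> proj2 a b u = proj2 a b v) \<Longrightarrow> trace_eq u v"
proof (induction u arbitrary: v)
  case Nil
  show ?case
  proof (cases v)
    case Nil then show ?thesis by simp
  next
    case (Cons c v')
    then have "proj2 c c v \<noteq> []" by (simp add: proj2_def)
    moreover have "proj2 c c [] = []" by (simp add: proj2_def)
    ultimately show ?thesis using Nil.prems by (metis indep_irrefl)
  qed
next
  case (Cons a u)
  have "proj2 a a v = a # proj2 a a u" using Cons.prems[rule_format, of a a] by (simp add: proj2_def)
  then have "a \<in> set (proj2 a a v)" by simp
  then have "a \<in> set v" unfolding proj2_def by simp
  then obtain v1 v2 where v: "v = v1 @ a # v2" and na: "a \<notin> set v1"
    by (meson split_list_first)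
  have ind: "\<forall>c\<in>set v1. (a, c) \<in> I"
    using Cons.prems proj2_first_occurrence[OF na] v by blast
  have e1: "trace_eq v (a # v1 @ v2)" using v trace_eq_commute[OF ind] by simp
  have "\<forall>x y. (x, y) \<notin> I \<longrightarrow> proj2 x y u = proj2 x y (v1 @ v2)"
  proof (intro allI impI)
    fix x y assume xy: "(x, y) \<notin> I"
    have "proj2 x y (a # u) = proj2 x y (a # v1 @ v2)"
      using Cons.prems xy trace_eq_proj2[OF e1 xy] by simp
    then show "proj2 x y u = proj2 x y (v1 @ v2)" by (auto simp: proj2_def split: if_splits)
  qed
  then have "trace_eq u (v1 @ v2)" using Cons.IH by blast
  then have "trace_eq (a # u) (a # v1 @ v2)" using trace_eq_append_context[of u "v1 @ v2" "[a]" "[]"] by simp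
  then show ?case using trace_eq_sym[OF e1] by simp
qed

lemma trace_eq_iff_proj2: "trace_eq u v \<longleftrightarrow> (\<forall>a b. (a, b) \<notin> I \<longrightarrow> proj2 a b u = proj2 a b v)"
  using trace_eq_proj2 proj2_trace_eq by blast

lemma trace_eq_cancel_left: "trace_eq (x @ u) (x @ v) \<Longrightarrow> trace_eq u v"
  unfolding trace_eq_iff_proj2 proj2_def by auto

section \<open>Labelled pieces\<close>

text \<open>Heights start at 1; the label of a piece is its level in Viennot's heap picture.\<close>

definition height :: "('a \<times> nat) set \<Rightarrow> 'a \<Rightarrow> nat" where
  "height S a = Suc (Max (insert 0 (snd ` {p\<in>S. (a, fst p) \<notin> I})))"

definition push :: "('a \<times> nat) set \<Rightarrow> 'a \<Rightarrow> ('a \<times> nat) set" where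
  "push S a = insert (a, height S a) S"

definition pieces :: "'a list \<Rightarrow> ('a \<times> nat) set" where
  "pieces w = foldl push {} w"

lemma pieces_Nil[simp]: "pieces [] = {}" by (simp add: pieces_def)
lemma pieces_snoc[simp]: "pieces (w @ [a]) = push (pieces w) a" by (simp add: pieces_def)
lemma pieces_append: "pieces (u @ v) = foldl push (pieces u) v" by (simp add: pieces_def)

lemma finite_foldl_push: "finite S \<Longrightarrow> finite (foldl push S w)"
  by (induction w arbitrary: S) (auto simp: push_def)

lemma finite_pieces[simp]: "finite (pieces w)"
  unfolding pieces_def by (rule finite_foldl_push) simp

lemma foldl_push_mono: "S \<subseteq> foldl push S w"
proof (induction w arbitrary: S)
  case Nil then show ?case by simp
next
  case (Cons a w)
  have "S \<subseteq> push S a" by (auto simp: push_def)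
  then show ?case using Cons.IH[of "push S a"] by simp
qed

lemma pieces_append_mono: "pieces u \<subseteq> pieces (u @ v)"
  by (simp add: pieces_append foldl_push_mono)

lemma height_gt: "finite S \<Longrightarrow> (b, h) \<in> S \<Longrightarrow> (a, b) \<notin> I \<Longrightarrow> h < height S a"
proof -
  assume f: "finite S" and bh: "(b, h) \<in> S" and ab: "(a, b) \<notin> I"
  have "h \<in> insert 0 (snd ` {p\<in>S. (a, fst p) \<notin> I})" using bh ab by force
  moreover have "finite (insert 0 (snd ` {p\<in>S. (a, fst p) \<notin> I}))" using f by simp
  ultimately have "h \<le> Max (insert 0 (snd ` {p\<in>S. (a, fst p) \<notin> I}))" by simp
  then show ?thesis by (simp add: height_def)
qed

lemma height_le:
  assumes "finite S" "\<And>b h. (b, h) \<in> S \<Longrightarrow> (a, b) \<notin> I \<Longrightarrow> h < k" "0 < k"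
  shows "height S a \<le> k"
proof -
  have "\<forall>x\<in>insert 0 (snd ` {p\<in>S. (a, fst p) \<notin> I}). x < k" using assms by auto
  moreover have "finite (insert 0 (snd ` {p\<in>S. (a, fst p) \<notin> I}))" using assms by simp
  ultimately have "Max (insert 0 (snd ` {p\<in>S. (a, fst p) \<notin> I})) < k" by simp
  then show ?thesis by (simp add: height_def)
qed

lemma height_pos: "0 < height S a" by (simp add: height_def)

lemma height_cong: "{p\<in>S. (a, fst p) \<notin> I} = {p\<in>T. (a, fst p) \<notin> I} \<Longrightarrow> height S a = height T a"
  by (simp add: height_def)

lemma height_notin: "finite S \<Longrightarrow> (a, height S a) \<notin> S"
  using height_gt[of S a "height S a" a] by auto

lemma height_witness:
  assumes "finite S" "height S a = Suc m" "0 < m"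
  shows "\<exists>b. (b, m) \<in> S \<and> (a, b) \<notin> I"
proof -
  let ?M = "insert 0 (snd ` {p\<in>S. (a, fst p) \<notin> I})"
  have "Max ?M = m" using assms(2) by (simp add: height_def)
  moreover have "Max ?M \<in> ?M" using assms(1) by (intro Max_in) auto
  ultimately have "m \<in> ?M" by simp
  then show ?thesis using assms(3) by auto
qed

lemma height_insert_indep: "(b, a) \<in> I \<Longrightarrow> height (insert (a, x) S) b = height S b"
  by (rule height_cong) auto

lemma push_commute: "(a, b) \<in> I \<Longrightarrow> push (push S a) b = push (push S b) a"
  unfolding push_def
  using height_insert_indep[of b a] height_insert_indep[of a b] indep_sym by auto

lemma pieces_swap1: "swap1 I u v \<Longrightarrow> pieces u = pieces v"
proof -
  assume "swap1 I u v"
  then obtain p q a b where "(a, b) \<in> I" "u = p @ [a, b] @ q" "v = p @ [b, a] @ q"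
    unfolding swap1_def by blast
  then show ?thesis using push_commute[of a b "foldl push {} p"] by (simp add: pieces_def)
qed

lemma pieces_trace_eq: "trace_eq u v \<Longrightarrow> pieces u = pieces v"
proof (induction rule: rtranclp_induct)
  case base then show ?case by simp
next
  case (step y z) then show ?case using pieces_swap1 by simp
qed

lemma pieces_height_pos: "p \<in> pieces w \<Longrightarrow> 0 < snd p"
  by (induction w rule: rev_induct) (auto simp: push_def height_pos)

lemma pieces_height_le_length: "p \<in> pieces w \<Longrightarrow> snd p \<le> length w"
proof (induction w arbitrary: p rule: rev_induct)
  case Nil then show ?case by simp
next
  case (snoc a w)
  have "height (pieces w) a \<le> Suc (length w)"
    by (rule height_le) (use snoc.IH in force)+
  moreover have "\<And>q. q \<in> pieces w \<Longrightarrow> snd q \<le> Suc (length w)" using snoc.IH by force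
  ultimately show ?case using snoc.prems by (cases p) (auto simp: push_def)
qed

lemma card_pieces: "card (pieces w) = length w"
  by (induction w rule: rev_induct) (auto simp: push_def height_notin)

lemma pieces_dependent_height_neq:
  "(a, i) \<in> pieces w \<Longrightarrow> (b, j) \<in> pieces w \<Longrightarrow> (a, b) \<notin> I \<Longrightarrow> (a, i) \<noteq> (b, j) \<Longrightarrow> i \<noteq> j"
proof (induction w arbitrary: a i b j rule: rev_induct)
  case Nil then show ?case by simp
next
  case (snoc c w)
  have symD: "(b, a) \<notin> I" using snoc.prems(3) indep_sym by blast
  show ?case
  proof (cases "(a, i) \<in> pieces w \<and> (b, j) \<in> pieces w")
    case True then show ?thesis using snoc by blast
  next
    case False
    then have "(a, i) = (c, height (pieces w) c) \<or> (b, j) = (c, height (pieces w) c)"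
      using snoc.prems(1,2) by (auto simp: push_def)
    then show ?thesis
    proof
      assume e: "(a, i) = (c, height (pieces w) c)"
      then have "(b, j) \<in> pieces w" using snoc.prems(2,4) by (auto simp: push_def)
      then show ?thesis using height_gt[of "pieces w" b j c] e snoc.prems(3) by auto
    next
      assume e: "(b, j) = (c, height (pieces w) c)"
      then have "(a, i) \<in> pieces w" using snoc.prems(1,4) by (auto simp: push_def)
      then show ?thesis using height_gt[of "pieces w" a i c] e symD by auto
    qed
  qed
qed

lemma pieces_dependent_below:
  "(b, j) \<in> pieces w \<Longrightarrow> 1 < j \<Longrightarrow> \<exists>a. (a, j - 1) \<in> pieces w \<and> (b, a) \<notin> I"
proof (induction w arbitrary: b j rule: rev_induct)
  case Nil then show ?case by simp
next
  case (snoc c w)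
  show ?case
  proof (cases "(b, j) \<in> pieces w")
    case True then show ?thesis using snoc.IH[OF True snoc.prems(2)] by (auto simp: push_def)
  next
    case False
    then have e: "b = c" "j = height (pieces w) c" using snoc.prems(1) by (auto simp: push_def)
    have "height (pieces w) c = Suc (j - 1)" "0 < j - 1" using e snoc.prems(2) by auto
    then show ?thesis using height_witness[of "pieces w" c "j - 1"] e by (auto simp: push_def)
  qed
qed

lemma foldl_push_new_gt:
  "finite S \<Longrightarrow> (b, j) \<in> foldl push S z \<Longrightarrow> (b, j) \<notin> S \<Longrightarrow> (a, i) \<in> S \<Longrightarrow> (b, a) \<notin> I \<Longrightarrow> i < j"
proof (induction z arbitrary: S)
  case Nil then show ?case by simp
next
  case (Cons c z)
  have fs: "finite (push S c)" using Cons.prems(1) by (simp add: push_def)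
  show ?case
  proof (cases "(b, j) \<in> push S c")
    case True
    then have "b = c" "j = height S c" using Cons.prems(3) by (auto simp: push_def)
    then show ?thesis using height_gt[OF Cons.prems(1) Cons.prems(4)] Cons.prems(5) by simp
  next
    case False
    then show ?thesis using Cons.IH[OF fs _ False] Cons.prems by (auto simp: push_def)
  qed
qed

lemma pieces_append_new_gt:
  "(b, j) \<in> pieces (u @ z) \<Longrightarrow> (b, j) \<notin> pieces u \<Longrightarrow> (a, i) \<in> pieces u \<Longrightarrow> (a, b) \<notin> I \<Longrightarrow> i < j"
  using foldl_push_new_gt[of "pieces u" b j z a i] indep_sym by (auto simp: pieces_append)

definition downset :: "('a \<times> nat) set \<Rightarrow> ('a \<times> nat) set \<Rightarrow> bool" where
  "downset S T \<longleftrightarrow> S \<subseteq> T \<and> (\<forall>a i b j. (a, i) \<in> S \<longrightarrow> (b, j) \<in> T \<longrightarrow> (a, b) \<notin> I \<longrightarrow> j < i \<longrightarrow> (b, j) \<in> S)"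

lemma downset_refl: "downset S S" by (auto simp: downset_def)

lemma downset_trans: "downset A B \<Longrightarrow> downset B C \<Longrightarrow> downset A C"
  unfolding downset_def by blast

lemma downset_Un: "downset A T \<Longrightarrow> downset B T \<Longrightarrow> downset (A \<union> B) T"
  unfolding downset_def by (metis Un_iff Un_least)

lemma downset_UN:
  assumes h: "\<And>x. x \<in> X \<Longrightarrow> downset (A x) T"
  shows "downset (\<Union>x\<in>X. A x) T"
  unfolding downset_def
proof (intro conjI allI impI)
  show "(\<Union>x\<in>X. A x) \<subseteq> T"
  proof
    fix p assume "p \<in> (\<Union>x\<in>X. A x)"
    then obtain x where "x \<in> X" "p \<in> A x" by blast
    then show "p \<in> T" using h[of x] unfolding downset_def by blast
  qed
next
  fix a i b j assume ai: "(a, i) \<in> (\<Union>x\<in>X. A x)" and r: "(b, j) \<in> T" "(a, b) \<notin> I" "j < i"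
  then obtain x where x: "x \<in> X" "(a, i) \<in> A x" by blast
  then have "(b, j) \<in> A x" using h[OF x(1)] r unfolding downset_def by blast
  then show "(b, j) \<in> (\<Union>x\<in>X. A x)" using x(1) by blast
qed

lemma downset_subset: "downset S U \<Longrightarrow> S \<subseteq> T \<Longrightarrow> T \<subseteq> U \<Longrightarrow> downset S T"
  unfolding downset_def by blast

lemma downset_antisym: "downset A B \<Longrightarrow> downset B A \<Longrightarrow> A = B"
  unfolding downset_def by blast

lemma downset_pieces_append: "downset (pieces u) (pieces (u @ z))"
  unfolding downset_def using pieces_append_mono pieces_append_new_gt by fastforce

lemma downset_pieces_trace_eq: "trace_eq h (u @ z) \<Longrightarrow> downset (pieces u) (pieces h)"
  using downset_pieces_append pieces_trace_eq by metis

lemma downset_remove_top: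
  assumes S: "downset S (pieces (H @ [b]))"
  shows "downset (S - {(b, height (pieces H) b)}) (pieces H)"
proof -
  let ?j = "height (pieces H) b"
  have pH: "pieces (H @ [b]) = insert (b, ?j) (pieces H)" by (simp add: push_def)
  have "(b, ?j) \<notin> pieces H" by (simp add: height_notin)
  then show ?thesis using S unfolding pH downset_def by blast
qed

lemma height_remove_top:
  assumes S: "downset S (pieces (H @ [b]))" and top: "(b, height (pieces H) b) \<in> S"
  shows "height (S - {(b, height (pieces H) b)}) b = height (pieces H) b"
proof (rule height_cong, rule set_eqI, rule iffI)
  let ?j = "height (pieces H) b"
  fix p
  show "p \<in> {p \<in> S - {(b, ?j)}. (b, fst p) \<notin> I} \<Longrightarrow> p \<in> {p \<in> pieces H. (b, fst p) \<notin> I}"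
    using downset_remove_top[OF S] unfolding downset_def by blast
  assume p: "p \<in> {p \<in> pieces H. (b, fst p) \<notin> I}"
  obtain c l where cl: "p = (c, l)" by fastforce
  have "l < ?j" using height_gt[OF finite_pieces, of c l H b] p cl by simp
  then have "(c, l) \<in> S" using S top p cl unfolding downset_def by (auto simp: push_def)
  moreover have "(c, l) \<noteq> (b, ?j)" using p cl height_notin by auto
  ultimately show "p \<in> {p \<in> S - {(b, ?j)}. (b, fst p) \<notin> I}" using p cl by blast
qed

text \<open>If the last piece of \<open>H @ [b]\<close> belongs to a downset realised by a prefix \<open>w\<close> of \<open>H\<close>,
  then \<open>b\<close> commutes with the remaining suffix: a dependent letter of the suffix would carry a
  piece of smaller height that is forced into the downset but is missing from \<open>w\<close>.\<close>

lemma top_indep_suffix: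
  assumes S: "downset S (pieces (H @ [b]))" and top: "(b, height (pieces H) b) \<in> S"
    and wz: "trace_eq H (w @ z)" "pieces w = S - {(b, height (pieces H) b)}"
    and c: "c \<in> set z"
  shows "(b, c) \<in> I"
proof (rule ccontr)
  let ?j = "height (pieces H) b"
  assume d: "(b, c) \<notin> I"
  obtain z1 z2 where z: "z = z1 @ c # z2" using c by (meson split_list)
  define l where "l = height (pieces (w @ z1)) c"
  have l1: "(c, l) \<notin> pieces (w @ z1)" using height_notin l_def by simp
  have "(c, l) \<in> pieces ((w @ z1) @ [c])" by (simp only: pieces_snoc) (simp add: push_def l_def)
  then have l2: "(c, l) \<in> pieces H"
    using pieces_trace_eq[OF wz(1)] z pieces_append_mono[of "w @ z1 @ [c]" z2] by auto
  have "l < ?j" using height_gt[OF finite_pieces l2 d] by simp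
  then have "(c, l) \<in> S" using S top l2 d unfolding downset_def by (auto simp: push_def)
  moreover have "(c, l) \<noteq> (b, ?j)" using l2 height_notin by auto
  ultimately have "(c, l) \<in> pieces w" using wz(2) by blast
  then show False using l1 pieces_append_mono[of w z1] by blast
qed

lemma downset_pieces_realize:
  "downset S (pieces H) \<Longrightarrow> \<exists>w z. trace_eq H (w @ z) \<and> pieces w = S"
proof (induction H arbitrary: S rule: rev_induct)
  case Nil
  then have "S = {}" by (auto simp: downset_def)
  then show ?case by (intro exI[of _ "[]"]) auto
next
  case (snoc b H)
  define j where "j = height (pieces H) b"
  have pH: "pieces (H @ [b]) = insert (b, j) (pieces H)" by (simp add: push_def j_def)
  show ?case
  proof (cases "(b, j) \<in> S")
    case False
    then have "S \<subseteq> pieces H" using snoc.prems pH unfolding downset_def by auto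
    then have "downset S (pieces H)" using downset_subset[OF snoc.prems] pH by blast
    then obtain w z where wz: "trace_eq H (w @ z)" "pieces w = S" using snoc.IH by blast
    have "trace_eq (H @ [b]) ((w @ z) @ [b])" using trace_eq_append[of H "w @ z" "[b]" "[b]"] wz(1) by simp
    then show ?thesis using wz(2) by (intro exI[of _ w] exI[of _ "z @ [b]"]) simp
  next
    case True
    obtain w z where wz: "trace_eq H (w @ z)" "pieces w = S - {(b, j)}"
      using snoc.IH[OF downset_remove_top[OF snoc.prems]] j_def by blast
    have ind: "\<forall>c\<in>set z. (b, c) \<in> I" using top_indep_suffix[OF snoc.prems] True wz j_def by blast
    have "trace_eq (H @ [b]) (w @ z @ [b])" using trace_eq_append[OF wz(1), of "[b]" "[b]"] by simp
    moreover have "trace_eq (w @ z @ [b]) (w @ b # z)"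
      using trace_eq_append_context[OF trace_eq_snoc_commute[OF ind], of w "[]"] by simp
    ultimately have "trace_eq (H @ [b]) ((w @ [b]) @ z)" by simp
    moreover have "pieces (w @ [b]) = S"
      using wz(2) True height_remove_top[OF snoc.prems] j_def by (auto simp: push_def)
    ultimately show ?thesis by blast
  qed
qed

lemma pieces_complete: "pieces u = pieces v \<Longrightarrow> trace_eq u v"
proof (induction u arbitrary: v rule: rev_induct)
  case Nil
  then have "length v = 0" using card_pieces by (metis card.empty pieces_Nil)
  then show ?case by simp
next
  case (snoc a u)
  have "downset (pieces u) (pieces v)" using snoc.prems downset_pieces_append by metis
  then obtain w z where wz: "trace_eq v (w @ z)" "pieces w = pieces u" using downset_pieces_realize by blast
  have eu: "trace_eq u w" using snoc.IH wz(2) by simp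
  have "length v = Suc (length u)" using card_pieces snoc.prems by (metis length_append_singleton)
  moreover have "length v = length w + length z" using trace_eq_length[OF wz(1)] by simp
  moreover have "length w = length u" using trace_eq_length[OF eu] by simp
  ultimately obtain c where z: "z = [c]" by (cases z) auto
  have "pieces v = insert (c, height (pieces u) c) (pieces u)" using pieces_trace_eq[OF wz(1)] z wz(2) by (simp add: push_def)
  moreover have "pieces v = insert (a, height (pieces u) a) (pieces u)" using snoc.prems by (simp add: push_def)
  moreover have "(c, height (pieces u) c) \<notin> pieces u" "(a, height (pieces u) a) \<notin> pieces u" using height_notin by auto
  ultimately have "c = a" by (metis Pair_inject insertE insert_iff)
  have "trace_eq (w @ z) (u @ [a])" using trace_eq_append[OF trace_eq_sym[OF eu], of "[a]" "[a]"] z \<open>c = a\<close> by simp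
  then show ?case using wz(1) trace_eq_sym by (meson rtranclp_trans)
qed

lemma trace_eq_iff_pieces: "trace_eq u v \<longleftrightarrow> pieces u = pieces v"
  using pieces_trace_eq pieces_complete by blast

lemma prefix_iff_downset: "(\<exists>z. trace_eq w (u @ z)) \<longleftrightarrow> downset (pieces u) (pieces w)"
proof
  assume "\<exists>z. trace_eq w (u @ z)" then show "downset (pieces u) (pieces w)" using downset_pieces_trace_eq by blast
next
  assume "downset (pieces u) (pieces w)"
  then obtain w' z where "trace_eq w (w' @ z)" "pieces w' = pieces u" using downset_pieces_realize by blast
  then show "\<exists>z. trace_eq w (u @ z)"
    by (metis trace_eq_append trace_eq_iff_pieces rtranclp.rtrancl_refl rtranclp_trans)
qed

section \<open>Cartier--Foata sequences as sets of labelled pieces\<close>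

lemma distinct_clique_word: "distinct (clique_word (c::'a set)) \<and> set (clique_word c) = c"
  unfolding clique_word_def by (rule someI_ex) (metis finite_distinct_list finite)

definition prefix_word :: "'a gheap \<Rightarrow> nat \<Rightarrow> 'a list" where
  "prefix_word \<xi> n = concat (map (\<lambda>i. clique_word (\<xi> i)) [0..<n])"

lemma prefix_word_0[simp]: "prefix_word \<xi> 0 = []" by (simp add: prefix_word_def)
lemma prefix_word_Suc: "prefix_word \<xi> (Suc n) = prefix_word \<xi> n @ clique_word (\<xi> n)" by (simp add: prefix_word_def)
lemma pre_prefix_word: "pre I \<xi> n = heap I (prefix_word \<xi> n)" by (simp add: pre_def prefix_word_def)

text \<open>Sequences are indexed from 0, so the clique \<open>\<xi> k\<close> lies at height \<open>k + 1\<close>.\<close>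

definition pieces_below :: "'a gheap \<Rightarrow> nat \<Rightarrow> ('a \<times> nat) set" where
  "pieces_below \<xi> n = {(a, Suc k) | a k. a \<in> \<xi> k \<and> k < n}"

definition gpieces :: "'a gheap \<Rightarrow> ('a \<times> nat) set" where
  "gpieces \<xi> = {(a, Suc k) | a k. a \<in> \<xi> k}"

lemma finite_pieces_below: "finite (pieces_below \<xi> n)"
proof -
  have "pieces_below \<xi> n \<subseteq> UNIV \<times> {..n}" by (auto simp: pieces_below_def)
  then show ?thesis by (rule finite_subset) simp
qed

lemma pieces_below_gpieces: "pieces_below \<xi> n = {p \<in> gpieces \<xi>. snd p \<le> n}"
  by (auto simp: pieces_below_def gpieces_def)

lemma foldl_push_clique:
  "distinct xs \<Longrightarrow> clique I (set xs) \<Longrightarrow> finite S \<Longrightarrow> (\<forall>a\<in>set xs. height S a = m)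
   \<Longrightarrow> foldl push S xs = S \<union> (\<lambda>a. (a, m)) ` set xs"
proof (induction xs arbitrary: S)
  case Nil then show ?case by simp
next
  case (Cons a xs)
  have "\<forall>b\<in>set xs. height (push S a) b = m"
  proof
    fix b assume b: "b \<in> set xs"
    then have "a \<noteq> b" using Cons.prems(1) by auto
    then have "(a, b) \<in> I" using Cons.prems(2) b unfolding clique_def by auto
    then have "(b, a) \<in> I" using indep_sym by blast
    then show "height (push S a) b = m" using height_insert_indep Cons.prems(4) b by (simp add: push_def)
  qed
  moreover have "clique I (set xs)" using Cons.prems(2) unfolding clique_def by auto
  moreover have "finite (push S a)" using Cons.prems(3) by (simp add: push_def)
  ultimately have "foldl push (push S a) xs = push S a \<union> (\<lambda>a. (a, m)) ` set xs"
    using Cons.IH Cons.prems(1) by simp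
  moreover have "push S a = insert (a, m) S" using Cons.prems(4) by (simp add: push_def)
  ultimately have "foldl push S (a # xs) = insert (a, m) S \<union> (\<lambda>a. (a, m)) ` set xs" by simp
  then show ?case by auto
qed

lemma Mbar_clique: "\<xi> \<in> Mbar I \<Longrightarrow> clique I (\<xi> n)" by (simp add: Mbar_def)
lemma Mbar_arrow: "\<xi> \<in> Mbar I \<Longrightarrow> arrow I (\<xi> n) (\<xi> (Suc n))" by (simp add: Mbar_def)

lemma pieces_prefix_word: "\<xi> \<in> Mbar I \<Longrightarrow> pieces (prefix_word \<xi> n) = pieces_below \<xi> n"
proof (induction n)
  case 0 then show ?case by (simp add: pieces_below_def)
next
  case (Suc n)
  have heights: "\<forall>a\<in>\<xi> n. height (pieces_below \<xi> n) a = Suc n"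
  proof
    fix a assume a: "a \<in> \<xi> n"
    have le: "height (pieces_below \<xi> n) a \<le> Suc n"
      by (rule height_le) (auto simp: finite_pieces_below, auto simp: pieces_below_def)
    have ge: "Suc n \<le> height (pieces_below \<xi> n) a"
    proof (cases n)
      case 0 then show ?thesis using height_pos by (simp add: Suc_le_eq)
    next
      case (Suc n')
      then obtain c where c: "c \<in> \<xi> n'" "(c, a) \<notin> I"
        using Mbar_arrow[OF Suc.prems, of n'] a unfolding arrow_def by auto
      have "(a, c) \<notin> I" using c(2) indep_sym by blast
      moreover have "(c, Suc n') \<in> pieces_below \<xi> n" using c(1) Suc by (auto simp: pieces_below_def)
      ultimately have "Suc n' < height (pieces_below \<xi> n) a" using height_gt[OF finite_pieces_below] by blast
      then show ?thesis using Suc by simp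
    qed
    show "height (pieces_below \<xi> n) a = Suc n" using le ge by simp
  qed
  have "pieces (prefix_word \<xi> (Suc n)) = foldl push (pieces_below \<xi> n) (clique_word (\<xi> n))"
    using Suc.IH[OF Suc.prems] by (simp add: prefix_word_Suc pieces_append)
  also have "\<dots> = pieces_below \<xi> n \<union> (\<lambda>a. (a, Suc n)) ` \<xi> n"
    using foldl_push_clique[of "clique_word (\<xi> n)" "pieces_below \<xi> n" "Suc n"] distinct_clique_word[of "\<xi> n"]
      Mbar_clique[OF Suc.prems, of n] heights finite_pieces_below by simp
  also have "\<dots> = pieces_below \<xi> (Suc n)" by (auto simp: pieces_below_def less_Suc_eq)
  finally show ?case .
qed

lemma Mbar_empty_mono: "\<xi> \<in> Mbar I \<Longrightarrow> \<xi> n = {} \<Longrightarrow> n \<le> m \<Longrightarrow> \<xi> m = {}"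
proof (induction m)
  case 0 then show ?case by simp
next
  case (Suc m)
  show ?case
  proof (cases "n = Suc m")
    case True then show ?thesis using Suc.prems by simp
  next
    case False
    then have "\<xi> m = {}" using Suc by simp
    then show ?thesis using Mbar_arrow[OF Suc.prems(1), of m] unfolding arrow_def by auto
  qed
qed

definition cf_word :: "'a list \<Rightarrow> 'a gheap" where
  "cf_word w = (\<lambda>k. {a. (a, Suc k) \<in> pieces w})"

lemma cf_word_Mbar: "cf_word w \<in> Mbar I"
  unfolding Mbar_def
proof (intro CollectI allI conjI)
  fix n
  show "clique I (cf_word w n)"
    unfolding clique_def cf_word_def
  proof (intro ballI impI)
    fix a b assume a: "a \<in> {a. (a, Suc n) \<in> pieces w}" and b: "b \<in> {a. (a, Suc n) \<in> pieces w}" and ab: "a \<noteq> b"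
    show "(a, b) \<in> I"
      using pieces_dependent_height_neq[of a "Suc n" w b "Suc n"] a b ab by auto
  qed
  show "arrow I (cf_word w n) (cf_word w (Suc n))"
    unfolding arrow_def cf_word_def
  proof
    fix b assume b: "b \<in> {a. (a, Suc (Suc n)) \<in> pieces w}"
    then obtain a where "(a, Suc n) \<in> pieces w" "(b, a) \<notin> I" using pieces_dependent_below[of b "Suc (Suc n)" w] by auto
    then show "\<exists>a\<in>{a. (a, Suc n) \<in> pieces w}. (a, b) \<notin> I" using indep_sym by blast
  qed
qed

lemma gpieces_cf_word: "gpieces (cf_word w) = pieces w"
proof
  show "gpieces (cf_word w) \<subseteq> pieces w" by (auto simp: gpieces_def cf_word_def)
next
  show "pieces w \<subseteq> gpieces (cf_word w)"
  proof
    fix p assume p: "p \<in> pieces w"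
    then obtain a k where "p = (a, Suc k)" using pieces_height_pos[OF p] by (cases p; cases "snd p") auto
    then show "p \<in> gpieces (cf_word w)" using p by (auto simp: gpieces_def cf_word_def)
  qed
qed

lemma cf_word_empty: "length w \<le> k \<Longrightarrow> cf_word w k = {}"
  using pieces_height_le_length[of _ w] by (fastforce simp: cf_word_def)

lemma pieces_below_cf_word: "length w \<le> n \<Longrightarrow> pieces_below (cf_word w) n = pieces w"
  using pieces_below_gpieces[of "cf_word w" n] gpieces_cf_word[of w] pieces_height_le_length[of _ w] by (force intro: le_trans)

lemma trace_eq_prefix_word_cf_word: "length w \<le> n \<Longrightarrow> trace_eq w (prefix_word (cf_word w) n)"
  using pieces_complete pieces_below_cf_word pieces_prefix_word[OF cf_word_Mbar] by metis

lemma heap_eq_iff: "heap I u = heap I v \<longleftrightarrow> trace_eq u v"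
proof
  assume "heap I u = heap I v"
  then have "u \<in> heap I v" by (auto simp: heap_def)
  then show "trace_eq u v" by (auto simp: heap_def intro: trace_eq_sym)
next
  assume e: "trace_eq u v"
  show "heap I u = heap I v"
    unfolding heap_def
  proof (rule Collect_cong)
    fix x show "trace_eq u x \<longleftrightarrow> trace_eq v x" using e trace_eq_sym[OF e] by (meson rtranclp_trans)
  qed
qed

lemma trace_eq_some_heap: "trace_eq w (SOME u. u \<in> heap I w)"
proof -
  have "w \<in> heap I w" by (simp add: heap_def)
  then have "(SOME u. u \<in> heap I w) \<in> heap I w" by (rule someI)
  then show ?thesis by (simp add: heap_def)
qed

lemma hmul_heap: "hmul I (heap I u) (heap I v) = heap I (u @ v)"
  unfolding hmul_def heap_eq_iff using trace_eq_append[OF trace_eq_some_heap trace_eq_some_heap, of u v] trace_eq_sym by blast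

lemma heaps_heap[simp]: "heap I w \<in> heaps I" by (simp add: heaps_def)

lemma hle_heap_iff: "hle I (heap I u) (heap I w) \<longleftrightarrow> downset (pieces u) (pieces w)"
proof -
  have "hle I (heap I u) (heap I w) \<longleftrightarrow> (\<exists>z. heap I w = heap I (u @ z))"
    unfolding hle_def heaps_def using hmul_heap by auto
  also have "\<dots> \<longleftrightarrow> (\<exists>z. trace_eq w (u @ z))" using heap_eq_iff by simp
  finally show ?thesis using prefix_iff_downset by simp
qed

lemma cf_word_prefix_word: "\<xi> \<in> Mbar I \<Longrightarrow> \<xi> n = {} \<Longrightarrow> cf_word (prefix_word \<xi> n) = \<xi>"
proof (rule ext, rule set_eqI)
  fix k a assume M: "\<xi> \<in> Mbar I" and e: "\<xi> n = {}"
  have "a \<in> cf_word (prefix_word \<xi> n) k \<longleftrightarrow> a \<in> \<xi> k \<and> k < n"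
    using pieces_prefix_word[OF M] by (auto simp: cf_word_def pieces_below_def)
  also have "\<dots> \<longleftrightarrow> a \<in> \<xi> k" using Mbar_empty_mono[OF M e, of k] by (cases "k < n") auto
  finally show "a \<in> cf_word (prefix_word \<xi> n) k \<longleftrightarrow> a \<in> \<xi> k" .
qed

lemma cf_heap: "cf I (heap I w) = cf_word w"
  unfolding cf_def
proof (rule the_equality)
  show "cf_word w \<in> Mbar I \<and> (\<exists>n. cf_word w n = {} \<and> pre I (cf_word w) n = heap I w)"
    using cf_word_Mbar cf_word_empty[of w "length w"] trace_eq_prefix_word_cf_word[of w "length w"] heap_eq_iff pre_prefix_word
    by (metis trace_eq_sym order_refl)
next
  fix \<xi> assume h: "\<xi> \<in> Mbar I \<and> (\<exists>n. \<xi> n = {} \<and> pre I \<xi> n = heap I w)"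
  then obtain n where n: "\<xi> n = {}" "heap I (prefix_word \<xi> n) = heap I w" using pre_prefix_word by metis
  then have "pieces (prefix_word \<xi> n) = pieces w" using heap_eq_iff pieces_trace_eq by blast
  then have "cf_word (prefix_word \<xi> n) = cf_word w" unfolding cf_word_def by simp
  then show "\<xi> = cf_word w" using cf_word_prefix_word[of \<xi> n] h n(1) by simp
qed

lemma cf_fin: "\<xi> \<in> Mfin I \<Longrightarrow> cf I (fin I \<xi>) = \<xi>"
proof -
  assume "\<xi> \<in> Mfin I"
  then have M: "\<xi> \<in> Mbar I" and ex: "\<exists>n. \<xi> n = {}" by (auto simp: Mfin_def)
  let ?n = "LEAST n. \<xi> n = {}"
  have "\<xi> ?n = {}" using ex by (rule LeastI_ex)
  then show ?thesis unfolding fin_def pre_prefix_word cf_heap using cf_word_prefix_word[OF M] by simp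
qed

lemma fin_heaps: "fin I \<xi> \<in> heaps I" by (simp add: fin_def pre_def)

lemma downset_iff_truncations: "downset S T \<longleftrightarrow> (\<forall>n. downset {p\<in>S. snd p \<le> n} {p\<in>T. snd p \<le> n})"
proof
  assume "downset S T" then show "\<forall>n. downset {p\<in>S. snd p \<le> n} {p\<in>T. snd p \<le> n}"
    unfolding downset_def by auto
next
  assume h: "\<forall>n. downset {p\<in>S. snd p \<le> n} {p\<in>T. snd p \<le> n}"
  show "downset S T" unfolding downset_def
  proof (intro conjI allI impI)
    show "S \<subseteq> T"
    proof
      fix p assume "p \<in> S"
      then show "p \<in> T" using h[rule_format, of "snd p"] unfolding downset_def by blast
    qed
  next
    fix a i b j assume r: "(a, i) \<in> S" "(b, j) \<in> T" "(a, b) \<notin> I" "j < i"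
    have "(a, i) \<in> {p\<in>S. snd p \<le> i}" "(b, j) \<in> {p\<in>T. snd p \<le> i}" using r by auto
    then have "(b, j) \<in> {p\<in>S. snd p \<le> i}" using h[rule_format, of i] r(3,4) unfolding downset_def by blast
    then show "(b, j) \<in> S" by simp
  qed
qed

lemma gle_iff_downset: "\<xi> \<in> Mbar I \<Longrightarrow> \<eta> \<in> Mbar I \<Longrightarrow> gle I \<xi> \<eta> \<longleftrightarrow> downset (gpieces \<xi>) (gpieces \<eta>)"
proof -
  assume M: "\<xi> \<in> Mbar I" "\<eta> \<in> Mbar I"
  have "gle I \<xi> \<eta> \<longleftrightarrow> (\<forall>n. downset (pieces_below \<xi> n) (pieces_below \<eta> n))"
    unfolding gle_def pre_prefix_word hle_heap_iff pieces_prefix_word[OF M(1)] pieces_prefix_word[OF M(2)] ..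
  also have "\<dots> \<longleftrightarrow> downset (gpieces \<xi>) (gpieces \<eta>)" unfolding pieces_below_gpieces downset_iff_truncations[of "gpieces \<xi>"] ..
  finally show ?thesis .
qed

lemma boundary_Mbar: "\<xi> \<in> boundary I \<Longrightarrow> \<xi> \<in> Mbar I" by (simp add: boundary_def)

lemma up_heap_eq: "up I (heap I w) = {\<xi> \<in> boundary I. downset (pieces w) (gpieces \<xi>)}"
  unfolding up_def cf_heap using gle_iff_downset[OF cf_word_Mbar boundary_Mbar] gpieces_cf_word by auto

lemma gpieces_inj: "gpieces \<xi> = gpieces \<eta> \<Longrightarrow> \<xi> = \<eta>"
proof (rule ext, rule set_eqI)
  fix k a assume "gpieces \<xi> = gpieces \<eta>"
  then have "(a, Suc k) \<in> gpieces \<xi> \<longleftrightarrow> (a, Suc k) \<in> gpieces \<eta>" by simp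
  then show "a \<in> \<xi> k \<longleftrightarrow> a \<in> \<eta> k" by (auto simp: gpieces_def)
qed

lemma gpieces_eq_UN: "\<xi> \<in> Mbar I \<Longrightarrow> gpieces \<xi> = (\<Union>n. pieces (prefix_word \<xi> n))"
proof -
  assume M: "\<xi> \<in> Mbar I"
  have "gpieces \<xi> = (\<Union>n. pieces_below \<xi> n)" by (auto simp: gpieces_def pieces_below_def)
  then show ?thesis using pieces_prefix_word[OF M] by simp
qed

definition prefix_chain :: "(nat \<Rightarrow> 'a list) \<Rightarrow> bool" where
  "prefix_chain h \<longleftrightarrow> (\<forall>m. downset (pieces (h m)) (pieces (h (Suc m))))"

lemma prefix_chain_downset: "prefix_chain h \<Longrightarrow> m \<le> m' \<Longrightarrow> downset (pieces (h m)) (pieces (h m'))"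
proof (induction m')
  case 0 then show ?case by (simp add: downset_refl)
next
  case (Suc m')
  show ?case
  proof (cases "m = Suc m'")
    case True then show ?thesis by (simp add: downset_refl)
  next
    case False
    then have "downset (pieces (h m)) (pieces (h m'))" using Suc by simp
    then show ?thesis using Suc.prems(1) downset_trans unfolding prefix_chain_def by blast
  qed
qed

lemma prefix_chain_subset: "prefix_chain h \<Longrightarrow> m \<le> m' \<Longrightarrow> pieces (h m) \<subseteq> pieces (h m')"
  using prefix_chain_downset unfolding downset_def by blast

lemma prefix_chain_downset_UN: "prefix_chain h \<Longrightarrow> downset (pieces (h m)) (\<Union>n. pieces (h n))"
  unfolding downset_def
proof (intro conjI allI impI)
  show "pieces (h m) \<subseteq> (\<Union>n. pieces (h n))" by blast
next
  fix a i b j assume c: "prefix_chain h" and r: "(a, i) \<in> pieces (h m)" "(b, j) \<in> (\<Union>n. pieces (h n))" "(a, b) \<notin> I" "j < i"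
  then obtain n where n: "(b, j) \<in> pieces (h n)" by blast
  have "(b, j) \<in> pieces (h (max m n))" using prefix_chain_subset[OF c, of n "max m n"] n by auto
  moreover have "downset (pieces (h m)) (pieces (h (max m n)))" using prefix_chain_downset[OF c] by simp
  ultimately show "(b, j) \<in> pieces (h m)" using r unfolding downset_def by blast
qed

lemma prefix_chain_finite_subset: "finite S \<Longrightarrow> prefix_chain h \<Longrightarrow> S \<subseteq> (\<Union>n. pieces (h n)) \<Longrightarrow> \<exists>m. S \<subseteq> pieces (h m)"
proof (induction S rule: finite_induct)
  case empty then show ?case by simp
next
  case (insert x S)
  then obtain m1 where m1: "S \<subseteq> pieces (h m1)" by auto
  obtain m2 where m2: "x \<in> pieces (h m2)" using insert.prems by auto
  have "pieces (h m1) \<subseteq> pieces (h (max m1 m2))" "pieces (h m2) \<subseteq> pieces (h (max m1 m2))"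
    using prefix_chain_subset[OF insert.prems(1)] by auto
  then show ?case using m1 m2 by blast
qed

lemma downset_UN_prefix_chain_iff: "prefix_chain h \<Longrightarrow> finite S \<Longrightarrow> downset S (\<Union>n. pieces (h n)) \<longleftrightarrow> (\<exists>m. downset S (pieces (h m)))"
proof
  assume c: "prefix_chain h" "finite S" "downset S (\<Union>n. pieces (h n))"
  have "S \<subseteq> (\<Union>n. pieces (h n))" using c(3) unfolding downset_def by blast
  then obtain m where m: "S \<subseteq> pieces (h m)" using prefix_chain_finite_subset[OF c(2,1)] by blast
  have "pieces (h m) \<subseteq> (\<Union>n. pieces (h n))" by blast
  then show "\<exists>m. downset S (pieces (h m))" using downset_subset[OF c(3) m] by blast
next
  assume c: "prefix_chain h" "finite S" and "\<exists>m. downset S (pieces (h m))"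
  then obtain m where "downset S (pieces (h m))" by blast
  then show "downset S (\<Union>n. pieces (h n))" using prefix_chain_downset_UN[OF c(1), of m] downset_trans by blast
qed

definition chain_lim :: "(nat \<Rightarrow> 'a list) \<Rightarrow> 'a gheap" where
  "chain_lim h = (\<lambda>k. {a. \<exists>m. (a, Suc k) \<in> pieces (h m)})"

lemma gpieces_chain_lim: "gpieces (chain_lim h) = (\<Union>n. pieces (h n))"
proof
  show "gpieces (chain_lim h) \<subseteq> (\<Union>n. pieces (h n))" by (auto simp: gpieces_def chain_lim_def)
next
  show "(\<Union>n. pieces (h n)) \<subseteq> gpieces (chain_lim h)"
  proof
    fix p assume "p \<in> (\<Union>n. pieces (h n))"
    then obtain n where p: "p \<in> pieces (h n)" by blast
    then obtain a k where "p = (a, Suc k)" using pieces_height_pos[OF p] by (cases p; cases "snd p") auto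
    then show "p \<in> gpieces (chain_lim h)" using p by (auto simp: gpieces_def chain_lim_def)
  qed
qed

lemma chain_lim_Mbar: "prefix_chain h \<Longrightarrow> chain_lim h \<in> Mbar I"
  unfolding Mbar_def
proof (intro CollectI allI conjI)
  fix n assume c: "prefix_chain h"
  show "clique I (chain_lim h n)"
    unfolding clique_def
  proof (intro ballI impI)
    fix a b assume a: "a \<in> chain_lim h n" and b: "b \<in> chain_lim h n" and ab: "a \<noteq> b"
    obtain m1 m2 where "(a, Suc n) \<in> pieces (h m1)" "(b, Suc n) \<in> pieces (h m2)" using a b by (auto simp: chain_lim_def)
    then have "a \<in> cf_word (h (max m1 m2)) n" "b \<in> cf_word (h (max m1 m2)) n"
      using prefix_chain_subset[OF c, of m1 "max m1 m2"] prefix_chain_subset[OF c, of m2 "max m1 m2"] by (auto simp: cf_word_def)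
    then show "(a, b) \<in> I" using Mbar_clique[OF cf_word_Mbar] ab unfolding clique_def by blast
  qed
  show "arrow I (chain_lim h n) (chain_lim h (Suc n))"
    unfolding arrow_def
  proof
    fix b assume "b \<in> chain_lim h (Suc n)"
    then obtain m where "b \<in> cf_word (h m) (Suc n)" by (auto simp: chain_lim_def cf_word_def)
    then obtain a where "a \<in> cf_word (h m) n" "(a, b) \<notin> I" using Mbar_arrow[OF cf_word_Mbar, of "h m" n] unfolding arrow_def by blast
    then show "\<exists>a\<in>chain_lim h n. (a, b) \<notin> I" by (auto simp: chain_lim_def cf_word_def)
  qed
qed

lemma cf_word_nonempty: "k * CARD('a) < length w \<Longrightarrow> cf_word w k \<noteq> {}"
proof
  assume l: "k * CARD('a) < length w" and e: "cf_word w k = {}"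
  have "pieces w \<subseteq> UNIV \<times> {1..k}"
  proof
    fix p assume p: "p \<in> pieces w"
    then obtain a k' where ak: "p = (a, Suc k')" using pieces_height_pos[OF p] by (cases p; cases "snd p") auto
    have "k' < k"
    proof (rule ccontr)
      assume "\<not> k' < k"
      then have "cf_word w k' = {}" using Mbar_empty_mono[OF cf_word_Mbar e] by simp
      then show False using p ak by (auto simp: cf_word_def)
    qed
    then show "p \<in> UNIV \<times> {1..k}" using ak by auto
  qed
  then have "card (pieces w) \<le> card (UNIV \<times> {1..k} :: ('a \<times> nat) set)"
    by (intro card_mono) auto
  also have "\<dots> = CARD('a) * k" by (simp add: card_cartesian_product)
  finally show False using l card_pieces by (simp add: mult.commute)
qed

lemma chain_lim_boundary: "prefix_chain h \<Longrightarrow> (\<forall>N. \<exists>m. N \<le> length (h m)) \<Longrightarrow> chain_lim h \<in> boundary I"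
  unfolding boundary_def
proof (intro CollectI conjI allI)
  assume c: "prefix_chain h" and u: "\<forall>N. \<exists>m. N \<le> length (h m)"
  show "chain_lim h \<in> Mbar I" using chain_lim_Mbar[OF c] .
  fix k
  obtain m where "Suc (k * CARD('a)) \<le> length (h m)" using u by blast
  then have "cf_word (h m) k \<noteq> {}" using cf_word_nonempty by simp
  then show "chain_lim h k \<noteq> {}" by (auto simp: chain_lim_def cf_word_def)
qed

section \<open>Left multiplication on the boundary\<close>

lemma prefix_chain_prefix_word: "\<xi> \<in> Mbar I \<Longrightarrow> prefix_chain (prefix_word \<xi>)"
  unfolding prefix_chain_def using downset_pieces_append by (simp add: prefix_word_Suc)

lemma prefix_chain_append_prefix_word: "prefix_chain (\<lambda>n. u @ prefix_word \<xi> n)"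
  unfolding prefix_chain_def using downset_pieces_append by (metis append_assoc prefix_word_Suc)

lemma length_prefix_word: "\<xi> \<in> boundary I \<Longrightarrow> n \<le> length (prefix_word \<xi> n)"
proof (induction n)
  case 0 then show ?case by simp
next
  case (Suc n)
  have "\<xi> n \<noteq> {}" using Suc.prems by (simp add: boundary_def)
  then have "clique_word (\<xi> n) \<noteq> []" using distinct_clique_word[of "\<xi> n"] by auto
  then show ?case using Suc by (simp add: prefix_word_Suc) (metis Suc_leI add_le_less_mono length_greater_0_conv add_0_right)
qed

lemma glub_cf_word_chain: "prefix_chain h \<Longrightarrow> glub I (\<lambda>n. cf_word (h n)) = chain_lim h"
  unfolding glub_def
proof (rule the_equality)
  assume c: "prefix_chain h"
  have M: "chain_lim h \<in> Mbar I" using chain_lim_Mbar[OF c] .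
  show "chain_lim h \<in> Mbar I \<and> (\<forall>n. gle I (cf_word (h n)) (chain_lim h)) \<and>
    (\<forall>\<zeta>'\<in>Mbar I. (\<forall>n. gle I (cf_word (h n)) \<zeta>') \<longrightarrow> gle I (chain_lim h) \<zeta>')"
  proof (intro conjI allI ballI impI)
    show "chain_lim h \<in> Mbar I" using M .
    fix n show "gle I (cf_word (h n)) (chain_lim h)"
      using gle_iff_downset[OF cf_word_Mbar M] gpieces_cf_word gpieces_chain_lim prefix_chain_downset_UN[OF c] by simp
  next
    fix \<zeta>' assume M': "\<zeta>' \<in> Mbar I" and a: "\<forall>n. gle I (cf_word (h n)) \<zeta>'"
    then have "\<forall>n. downset (pieces (h n)) (gpieces \<zeta>')" using gle_iff_downset[OF cf_word_Mbar M'] gpieces_cf_word by simp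
    then have "downset (\<Union>n. pieces (h n)) (gpieces \<zeta>')" using downset_UN[of UNIV "\<lambda>n. pieces (h n)"] by simp
    then show "gle I (chain_lim h) \<zeta>'" using gle_iff_downset[OF M M'] gpieces_chain_lim by simp
  qed
next
  fix \<zeta> assume c: "prefix_chain h" and h: "\<zeta> \<in> Mbar I \<and> (\<forall>n. gle I (cf_word (h n)) \<zeta>) \<and>
    (\<forall>\<zeta>'\<in>Mbar I. (\<forall>n. gle I (cf_word (h n)) \<zeta>') \<longrightarrow> gle I \<zeta> \<zeta>')"
  have M: "chain_lim h \<in> Mbar I" using chain_lim_Mbar[OF c] .
  have "\<forall>n. gle I (cf_word (h n)) (chain_lim h)"
    using gle_iff_downset[OF cf_word_Mbar M] gpieces_cf_word gpieces_chain_lim prefix_chain_downset_UN[OF c] by simp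
  then have g1: "gle I \<zeta> (chain_lim h)" using h M by blast
  have "\<forall>n. downset (pieces (h n)) (gpieces \<zeta>)" using h gle_iff_downset[OF cf_word_Mbar, of \<zeta>] gpieces_cf_word by auto
  then have "downset (\<Union>n. pieces (h n)) (gpieces \<zeta>)" using downset_UN[of UNIV "\<lambda>n. pieces (h n)"] by simp
  then have "downset (gpieces (chain_lim h)) (gpieces \<zeta>)" using gpieces_chain_lim by simp
  moreover have "downset (gpieces \<zeta>) (gpieces (chain_lim h))" using g1 gle_iff_downset[OF _ M] h by simp
  ultimately show "\<zeta> = chain_lim h" using downset_antisym gpieces_inj by metis
qed

lemma act_heap_eq: "act I (heap I u) \<zeta> = chain_lim (\<lambda>n. u @ prefix_word \<zeta> n)"
proof -
  have "(\<lambda>n. cf I (hmul I (heap I u) (pre I \<zeta> n))) = (\<lambda>n. cf_word (u @ prefix_word \<zeta> n))"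
    by (simp add: pre_prefix_word hmul_heap cf_heap)
  then show ?thesis unfolding act_def using glub_cf_word_chain[OF prefix_chain_append_prefix_word] by simp
qed

lemma gpieces_act: "gpieces (act I (heap I u) \<zeta>) = (\<Union>n. pieces (u @ prefix_word \<zeta> n))"
  using act_heap_eq gpieces_chain_lim by simp

lemma act_boundary: "\<zeta> \<in> boundary I \<Longrightarrow> act I (heap I u) \<zeta> \<in> boundary I"
proof -
  assume b: "\<zeta> \<in> boundary I"
  have "\<forall>N. \<exists>m. N \<le> length (u @ prefix_word \<zeta> m)"
    using length_prefix_word[OF b] by (metis le_add2 le_trans length_append)
  then show ?thesis using act_heap_eq chain_lim_boundary[OF prefix_chain_append_prefix_word] by simp
qed

lemma up_iff_prefix_word: "\<xi> \<in> boundary I \<Longrightarrow> \<xi> \<in> up I (heap I w) \<longleftrightarrow> (\<exists>m. downset (pieces w) (pieces (prefix_word \<xi> m)))"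
  using up_heap_eq gpieces_eq_UN[OF boundary_Mbar] downset_UN_prefix_chain_iff[OF prefix_chain_prefix_word[OF boundary_Mbar] finite_pieces] by simp

lemma act_in_up_iff: "\<zeta> \<in> boundary I \<Longrightarrow>
  act I (heap I u) \<zeta> \<in> up I (heap I w) \<longleftrightarrow> (\<exists>m. downset (pieces w) (pieces (u @ prefix_word \<zeta> m)))"
  using up_heap_eq[of w] act_boundary gpieces_act downset_UN_prefix_chain_iff[OF prefix_chain_append_prefix_word finite_pieces] by simp

lemma act_in_up_append_iff: "\<zeta> \<in> boundary I \<Longrightarrow>
  act I (heap I u) \<zeta> \<in> up I (heap I (u @ v)) \<longleftrightarrow> \<zeta> \<in> up I (heap I v)"
proof -
  assume b: "\<zeta> \<in> boundary I"
  have "act I (heap I u) \<zeta> \<in> up I (heap I (u @ v)) \<longleftrightarrow> (\<exists>m z. trace_eq (u @ prefix_word \<zeta> m) ((u @ v) @ z))"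
    by (simp only: act_in_up_iff[OF b] prefix_iff_downset[symmetric])
  also have "\<dots> \<longleftrightarrow> (\<exists>m z. trace_eq (prefix_word \<zeta> m) (v @ z))"
  proof
    assume "\<exists>m z. trace_eq (u @ prefix_word \<zeta> m) ((u @ v) @ z)"
    then show "\<exists>m z. trace_eq (prefix_word \<zeta> m) (v @ z)" using trace_eq_cancel_left by fastforce
  next
    assume "\<exists>m z. trace_eq (prefix_word \<zeta> m) (v @ z)"
    then obtain m z where "trace_eq (prefix_word \<zeta> m) (v @ z)" by blast
    then have "trace_eq (u @ prefix_word \<zeta> m) ((u @ v) @ z)" using trace_eq_append[of u u "prefix_word \<zeta> m" "v @ z"] by simp
    then show "\<exists>m z. trace_eq (u @ prefix_word \<zeta> m) ((u @ v) @ z)" by blast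
  qed
  also have "\<dots> \<longleftrightarrow> \<zeta> \<in> up I (heap I v)" by (simp only: up_iff_prefix_word[OF b] prefix_iff_downset[symmetric])
  finally show ?thesis .
qed

lemma up_Nil: "up I (heap I []) = boundary I"
  using up_heap_eq[of "[]"] by (simp add: downset_def)

lemma in_up_prefix_word: "\<xi> \<in> boundary I \<Longrightarrow> \<xi> \<in> up I (heap I (prefix_word \<xi> n))"
  using up_iff_prefix_word downset_refl by blast

lemma up_pieces_subset: "\<xi> \<in> up I (heap I w) \<Longrightarrow> pieces w \<subseteq> gpieces \<xi>"
  using up_heap_eq unfolding downset_def by blast

lemma act_inj:
  assumes b: "\<zeta> \<in> boundary I" "\<zeta>' \<in> boundary I" and e: "act I (heap I u) \<zeta> = act I (heap I u) \<zeta>'"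
  shows "\<zeta> = \<zeta>'"
proof -
  have iff: "\<And>v. \<zeta> \<in> up I (heap I v) \<longleftrightarrow> \<zeta>' \<in> up I (heap I v)"
    using act_in_up_append_iff[OF b(1)] act_in_up_append_iff[OF b(2)] e by metis
  have "gpieces \<zeta> \<subseteq> gpieces \<zeta>'"
  proof -
    have "\<And>n. pieces (prefix_word \<zeta> n) \<subseteq> gpieces \<zeta>'" using iff in_up_prefix_word[OF b(1)] up_pieces_subset by blast
    then show ?thesis using gpieces_eq_UN[OF boundary_Mbar[OF b(1)]] by blast
  qed
  moreover have "gpieces \<zeta>' \<subseteq> gpieces \<zeta>"
  proof -
    have "\<And>n. pieces (prefix_word \<zeta>' n) \<subseteq> gpieces \<zeta>" using iff in_up_prefix_word[OF b(2)] up_pieces_subset by blast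
    then show ?thesis using gpieces_eq_UN[OF boundary_Mbar[OF b(2)]] by blast
  qed
  ultimately show ?thesis using gpieces_inj by blast
qed

lemma pieces_append_left_mono: "downset (pieces a) (pieces b) \<Longrightarrow> pieces (u @ a) \<subseteq> pieces (u @ b)"
proof -
  assume "downset (pieces a) (pieces b)"
  then obtain z where "trace_eq b (a @ z)" using prefix_iff_downset by blast
  then have "trace_eq (u @ b) ((u @ a) @ z)" using trace_eq_append[of u u b "a @ z"] by simp
  then show ?thesis using pieces_trace_eq pieces_append_mono by metis
qed

lemma up_prefix_word_quotient:
  assumes xi: "\<xi> \<in> up I (heap I u)"
  obtains m0 h where "\<And>n. trace_eq (prefix_word \<xi> (n + m0)) (u @ h n)" "prefix_chain h"
    "\<forall>N. \<exists>m. N \<le> length (h m)"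
proof -
  have b: "\<xi> \<in> boundary I" using xi by (simp add: up_def)
  have M: "\<xi> \<in> Mbar I" using boundary_Mbar[OF b] .
  obtain m0 where m0: "downset (pieces u) (pieces (prefix_word \<xi> m0))" using up_iff_prefix_word[OF b] xi by blast
  have ex: "\<exists>z. trace_eq (prefix_word \<xi> (n + m0)) (u @ z)" for n
  proof -
    have "downset (pieces u) (pieces (prefix_word \<xi> (n + m0)))"
      using m0 prefix_chain_downset[OF prefix_chain_prefix_word[OF M], of m0 "n + m0"] downset_trans by simp
    then show ?thesis using prefix_iff_downset by blast
  qed
  define h where "h n = (SOME z. trace_eq (prefix_word \<xi> (n + m0)) (u @ z))" for n
  have hz: "trace_eq (prefix_word \<xi> (n + m0)) (u @ h n)" for n unfolding h_def using ex by (rule someI_ex)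
  have "prefix_chain h"
    unfolding prefix_chain_def
  proof
    fix n
    let ?c = "clique_word (\<xi> (n + m0))"
    have "trace_eq (u @ h (Suc n)) (prefix_word \<xi> (n + m0) @ ?c)"
      using hz[of "Suc n"] trace_eq_sym by (simp add: prefix_word_Suc)
    moreover have "trace_eq (prefix_word \<xi> (n + m0) @ ?c) ((u @ h n) @ ?c)"
      using trace_eq_append[OF hz] by blast
    ultimately have "trace_eq (u @ h (Suc n)) (u @ h n @ ?c)" by simp
    then have "trace_eq (h (Suc n)) (h n @ ?c)" by (rule trace_eq_cancel_left)
    then show "downset (pieces (h n)) (pieces (h (Suc n)))" by (rule downset_pieces_trace_eq)
  qed
  moreover have "\<forall>N. \<exists>m. N \<le> length (h m)"
  proof
    fix N
    have "N + length u \<le> length (prefix_word \<xi> (N + length u + m0))"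
      using length_prefix_word[OF b] by (meson le_add1 le_trans)
    also have "\<dots> = length u + length (h (N + length u))" using trace_eq_length[OF hz] by simp
    finally show "\<exists>m. N \<le> length (h m)" by auto
  qed
  ultimately show ?thesis using hz that by blast
qed

lemma act_surj:
  assumes xi: "\<xi> \<in> up I (heap I u)"
  shows "\<exists>\<zeta>\<in>boundary I. act I (heap I u) \<zeta> = \<xi>"
proof -
  have M: "\<xi> \<in> Mbar I" using xi by (simp add: up_def boundary_Mbar)
  obtain m0 h where hz: "\<And>n. trace_eq (prefix_word \<xi> (n + m0)) (u @ h n)"
    and ch: "prefix_chain h" and unb: "\<forall>N. \<exists>m. N \<le> length (h m)"
    using up_prefix_word_quotient[OF xi] by blast
  define \<zeta> where "\<zeta> = chain_lim h"
  have zb: "\<zeta> \<in> boundary I" using chain_lim_boundary[OF ch unb] \<zeta>_def by simp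
  have PgZ: "gpieces \<zeta> = (\<Union>n. pieces (h n))" using gpieces_chain_lim \<zeta>_def by simp
  have "gpieces (act I (heap I u) \<zeta>) = gpieces \<xi>"
  proof
    show "gpieces (act I (heap I u) \<zeta>) \<subseteq> gpieces \<xi>"
    proof
      fix p assume "p \<in> gpieces (act I (heap I u) \<zeta>)"
      then obtain m where p: "p \<in> pieces (u @ prefix_word \<zeta> m)" using gpieces_act by blast
      have "downset (pieces (prefix_word \<zeta> m)) (gpieces \<zeta>)" using in_up_prefix_word[OF zb] up_heap_eq by blast
      then obtain n where "downset (pieces (prefix_word \<zeta> m)) (pieces (h n))"
        using downset_UN_prefix_chain_iff[OF ch finite_pieces] PgZ by auto
      then have "p \<in> pieces (u @ h n)" using pieces_append_left_mono p by blast
      then have "p \<in> pieces (prefix_word \<xi> (n + m0))" using pieces_trace_eq[OF hz] by simp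
      then show "p \<in> gpieces \<xi>" using gpieces_eq_UN[OF M] by blast
    qed
  next
    show "gpieces \<xi> \<subseteq> gpieces (act I (heap I u) \<zeta>)"
    proof
      fix p assume "p \<in> gpieces \<xi>"
      then obtain n where "p \<in> pieces (prefix_word \<xi> n)" using gpieces_eq_UN[OF M] by blast
      then have "p \<in> pieces (prefix_word \<xi> (n + m0))"
        using prefix_chain_subset[OF prefix_chain_prefix_word[OF M], of n "n + m0"] by auto
      then have p: "p \<in> pieces (u @ h n)" using pieces_trace_eq[OF hz] by simp
      have "downset (pieces (h n)) (gpieces \<zeta>)" using prefix_chain_downset_UN[OF ch] PgZ by simp
      then obtain m where "downset (pieces (h n)) (pieces (prefix_word \<zeta> m))"
        using up_iff_prefix_word[OF zb] up_heap_eq zb by blast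
      then have "p \<in> pieces (u @ prefix_word \<zeta> m)" using pieces_append_left_mono p by blast
      then show "p \<in> gpieces (act I (heap I u) \<zeta>)" using gpieces_act by blast
    qed
  qed
  then show ?thesis using gpieces_inj zb by blast
qed

lemma minus_heap_act:
  assumes "\<xi> \<in> up I (heap I u)"
  shows "minus_heap I \<xi> (heap I u) \<in> boundary I \<and> act I (heap I u) (minus_heap I \<xi> (heap I u)) = \<xi>"
proof -
  obtain \<zeta> where z: "\<zeta> \<in> boundary I" "act I (heap I u) \<zeta> = \<xi>" using act_surj[OF assms] by blast
  have "\<exists>!\<zeta>. \<zeta> \<in> boundary I \<and> act I (heap I u) \<zeta> = \<xi>"
    using z act_inj by blast
  then show ?thesis unfolding minus_heap_def by (rule theI')
qed

lemma up_boundary: "up I x \<subseteq> boundary I" by (auto simp: up_def)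

lemma up_append_subset: "up I (heap I (u @ v)) \<subseteq> up I (heap I u)"
  unfolding up_heap_eq using downset_pieces_append downset_trans by blast

lemma minus_heap_preimage_up:
  "{\<xi> \<in> up I (heap I u). minus_heap I \<xi> (heap I u) \<in> up I (heap I v)} = up I (heap I (u @ v))"
proof
  show "{\<xi> \<in> up I (heap I u). minus_heap I \<xi> (heap I u) \<in> up I (heap I v)} \<subseteq> up I (heap I (u @ v))"
  proof
    fix \<xi> assume "\<xi> \<in> {\<xi> \<in> up I (heap I u). minus_heap I \<xi> (heap I u) \<in> up I (heap I v)}"
    then have h: "\<xi> \<in> up I (heap I u)" "minus_heap I \<xi> (heap I u) \<in> up I (heap I v)" by auto
    then show "\<xi> \<in> up I (heap I (u @ v))"
      using minus_heap_act[OF h(1)] act_in_up_append_iff by metis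
  qed
next
  show "up I (heap I (u @ v)) \<subseteq> {\<xi> \<in> up I (heap I u). minus_heap I \<xi> (heap I u) \<in> up I (heap I v)}"
  proof
    fix \<xi> assume h: "\<xi> \<in> up I (heap I (u @ v))"
    then have h1: "\<xi> \<in> up I (heap I u)" using up_append_subset by blast
    have m: "minus_heap I \<xi> (heap I u) \<in> boundary I" "act I (heap I u) (minus_heap I \<xi> (heap I u)) = \<xi>"
      using minus_heap_act[OF h1] by auto
    have "minus_heap I \<xi> (heap I u) \<in> up I (heap I v)"
      using act_in_up_append_iff[OF m(1), of u v] m(2) h by simp
    then show "\<xi> \<in> {\<xi> \<in> up I (heap I u). minus_heap I \<xi> (heap I u) \<in> up I (heap I v)}"
      using h1 by simp
  qed
qed

lemma up_Int_up:
  "up I (heap I v) \<inter> up I (heap I w) = {} \<or> (\<exists>y. up I (heap I v) \<inter> up I (heap I w) = up I (heap I y))"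
proof (cases "up I (heap I v) \<inter> up I (heap I w) = {}")
  case True then show ?thesis by blast
next
  case False
  then obtain \<xi>0 where x0: "\<xi>0 \<in> up I (heap I v)" "\<xi>0 \<in> up I (heap I w)" by blast
  have b0: "\<xi>0 \<in> boundary I" using x0 up_boundary by blast
  let ?S = "pieces v \<union> pieces w"
  have cv: "downset (pieces v) (gpieces \<xi>0)" and cw: "downset (pieces w) (gpieces \<xi>0)" using x0 up_heap_eq by auto
  have "downset ?S (gpieces \<xi>0)" using downset_Un[OF cv cw] .
  then obtain m where "downset ?S (pieces (prefix_word \<xi>0 m))"
    using downset_UN_prefix_chain_iff[OF prefix_chain_prefix_word[OF boundary_Mbar[OF b0]]] gpieces_eq_UN[OF boundary_Mbar[OF b0]] by auto
  then obtain y z where yz: "pieces y = ?S" using downset_pieces_realize by blast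
  have S0: "?S \<subseteq> gpieces \<xi>0" using cv cw unfolding downset_def by blast
  have cvS: "downset (pieces v) ?S" using downset_subset[OF cv _ S0] by blast
  have cwS: "downset (pieces w) ?S" using downset_subset[OF cw _ S0] by blast
  have "up I (heap I v) \<inter> up I (heap I w) = up I (heap I y)"
    unfolding up_heap_eq yz using downset_Un downset_trans cvS cwS by blast
  then show ?thesis by blast
qed

section \<open>Shift invariance of Bernoulli measures\<close>

lemma up_Pow: "up I ` heaps I \<subseteq> Pow (boundary I)"
  using up_boundary by blast

lemma sets_cyl_space: "sets (cyl_space I) = sigma_sets (boundary I) (up I ` heaps I)"
  unfolding cyl_space_def using up_Pow by (rule sets_measure_of)

lemma countable_heaps: "countable (heaps I)"
  unfolding heaps_def by simp

lemma Int_stable_up: "Int_stable (insert {} (up I ` heaps I))"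
proof (rule Int_stableI)
  fix A B assume A: "A \<in> insert {} (up I ` heaps I)" and B: "B \<in> insert {} (up I ` heaps I)"
  show "A \<inter> B \<in> insert {} (up I ` heaps I)"
  proof (cases "A = {} \<or> B = {}")
    case False
    then obtain v w where "A = up I (heap I v)" "B = up I (heap I w)" using A B by (auto simp: heaps_def)
    then show ?thesis using up_Int_up[of v w] by (auto simp: heaps_def)
  qed auto
qed

context
  fixes P assumes bern: "bernoulli I P"
begin

lemma prob_space_P: "prob_space P" using bern by (simp add: bernoulli_def)
lemma space_P: "space P = boundary I" using bern by (simp add: bernoulli_def)
lemma sets_P: "sets P = sets (cyl_space I)" using bern by (simp add: bernoulli_def)

lemma up_sets: "x \<in> heaps I \<Longrightarrow> up I x \<in> sets P"
  using sets_P sets_cyl_space by (auto intro: sigma_sets.Basic)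

lemma up_heap_sets[simp]: "up I (heap I w) \<in> sets P"
  by (rule up_sets) simp

lemma emeasure_up_append:
  "emeasure P (up I (heap I (u @ v))) = emeasure P (up I (heap I u)) * emeasure P (up I (heap I v))"
proof -
  interpret prob_space P by (rule prob_space_P)
  have "measure P (up I (hmul I (heap I u) (heap I v))) = measure P (up I (heap I u)) * measure P (up I (heap I v))"
    using bern by (simp add: bernoulli_def)
  then show ?thesis using hmul_heap emeasure_eq_measure by (simp add: ennreal_mult)
qed

lemma space_restrict_up: "space (restrict_space P (up I (heap I u))) = up I (heap I u)"
  using space_P up_boundary by (simp add: space_restrict_space Int_absorb2)

lemma minus_heap_measurable:
  "(\<lambda>\<xi>. minus_heap I \<xi> (heap I u)) \<in> measurable (restrict_space P (up I (heap I u))) (cyl_space I)"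
  unfolding cyl_space_def
proof (rule measurable_measure_of[OF up_Pow])
  show "(\<lambda>\<xi>. minus_heap I \<xi> (heap I u)) \<in> space (restrict_space P (up I (heap I u))) \<rightarrow> boundary I"
    using space_restrict_up minus_heap_act by auto
next
  fix y assume "y \<in> up I ` heaps I"
  then obtain v where y: "y = up I (heap I v)" by (auto simp: heaps_def)
  have "(\<lambda>\<xi>. minus_heap I \<xi> (heap I u)) -` y \<inter> space (restrict_space P (up I (heap I u)))
      = up I (heap I (u @ v))"
    using minus_heap_preimage_up[of u v] space_restrict_up y by auto
  then show "(\<lambda>\<xi>. minus_heap I \<xi> (heap I u)) -` y \<inter> space (restrict_space P (up I (heap I u)))
      \<in> sets (restrict_space P (up I (heap I u)))"
    using up_append_subset by (auto simp: sets_restrict_space_iff space_P up_boundary Int_absorb2)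
qed

text \<open>Both sides agree on cylinders, by multiplicativity.\<close>

lemma distr_minus_heap:
  "distr (restrict_space P (up I (heap I u))) (cyl_space I) (\<lambda>\<xi>. minus_heap I \<xi> (heap I u))
     = scale_measure (emeasure P (up I (heap I u))) P"
  (is "distr ?R _ ?m = _")
proof (rule measure_eqI_generator_eq[OF Int_stable_up, where \<Omega> = "boundary I" and A = "\<lambda>_. boundary I"])
  show "insert {} (up I ` heaps I) \<subseteq> Pow (boundary I)" using up_Pow by blast
next
  fix X assume X: "X \<in> insert {} (up I ` heaps I)"
  show "emeasure (distr ?R (cyl_space I) ?m) X = emeasure (scale_measure (emeasure P (up I (heap I u))) P) X"
  proof (cases "X = {}")
    case False
    then obtain v where X: "X = up I (heap I v)" using X by (auto simp: heaps_def)
    have "emeasure (distr ?R (cyl_space I) ?m) X = emeasure ?R (?m -` X \<inter> space ?R)"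
      using X up_heap_sets sets_P by (intro emeasure_distr[OF minus_heap_measurable]) auto
    also have "?m -` X \<inter> space ?R = up I (heap I (u @ v))"
      using minus_heap_preimage_up[of u v] space_restrict_up X by auto
    also have "emeasure ?R (up I (heap I (u @ v))) = emeasure P (up I (heap I (u @ v)))"
      using up_append_subset space_P up_boundary by (intro emeasure_restrict_space) (auto simp: Int_absorb2)
    finally show ?thesis using emeasure_up_append X by simp
  qed simp
next
  show "sets (distr ?R (cyl_space I) ?m) = sigma_sets (boundary I) (insert {} (up I ` heaps I))"
    by (subst sigma_sets_insert_empty) (simp add: sets_cyl_space)
  show "sets (scale_measure (emeasure P (up I (heap I u))) P) = sigma_sets (boundary I) (insert {} (up I ` heaps I))"
    by (subst sigma_sets_insert_empty) (simp add: sets_P sets_cyl_space)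
  show "range (\<lambda>_. boundary I) \<subseteq> insert {} (up I ` heaps I)"
    using up_Nil by (auto simp: heaps_def)
  interpret prob_space P by (rule prob_space_P)
  have "finite_measure ?R" by (intro finite_measure_restrict_space) (simp_all add: finite_measure_axioms)
  then show "emeasure (distr ?R (cyl_space I) ?m) (boundary I) \<noteq> \<infinity>" for i :: nat
    using finite_measure.emeasure_finite[OF finite_measure.finite_measure_distr[OF _ minus_heap_measurable]]
    by (simp add: infinity_ennreal_def)
qed simp

lemma nn_integral_minus_heap:
  assumes \<psi>: "\<psi> \<in> borel_measurable (cyl_space I)"
  shows "(\<integral>\<^sup>+\<xi>\<in>up I (heap I u). ennreal (\<psi> (minus_heap I \<xi> (heap I u))) \<partial>P)
       = emeasure P (up I (heap I u)) * (\<integral>\<^sup>+\<xi>. ennreal (\<psi> \<xi>) \<partial>P)"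
proof -
  let ?R = "restrict_space P (up I (heap I u))"
  have \<psi>': "(\<lambda>\<xi>. ennreal (\<psi> \<xi>)) \<in> borel_measurable (cyl_space I)" using \<psi> by measurable
  have "up I (heap I u) \<inter> space P \<in> sets P" using space_P up_boundary by (simp add: Int_absorb2)
  then have "(\<integral>\<^sup>+\<xi>\<in>up I (heap I u). ennreal (\<psi> (minus_heap I \<xi> (heap I u))) \<partial>P)
      = (\<integral>\<^sup>+\<xi>. ennreal (\<psi> (minus_heap I \<xi> (heap I u))) \<partial>?R)"
    by (simp add: nn_integral_restrict_space)
  also have "\<dots> = (\<integral>\<^sup>+\<xi>. ennreal (\<psi> \<xi>) \<partial>distr ?R (cyl_space I) (\<lambda>\<xi>. minus_heap I \<xi> (heap I u)))"
    by (rule nn_integral_distr[symmetric, OF minus_heap_measurable]) (simp add: \<psi>')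
  also have "\<dots> = emeasure P (up I (heap I u)) * (\<integral>\<^sup>+\<xi>. ennreal (\<psi> \<xi>) \<partial>P)"
    unfolding distr_minus_heap using \<psi>' measurable_cong_sets[OF sets_P refl]
    by (intro nn_integral_scale_measure) blast
  finally show ?thesis .
qed

end

section \<open>Asynchronous stopping times\<close>

definition V_levels :: "('a gheap \<Rightarrow> 'a gheap) \<Rightarrow> 'a gheap set set" where
  "V_levels V = {up I (fin I (V \<xi>)) | \<xi>. \<xi> \<in> boundary I \<and> V \<xi> \<in> Mfin I}"

context
  fixes V assumes ast: "AST I V"
begin

lemma up_fin_AST:
  assumes "\<xi>0 \<in> boundary I" "V \<xi>0 \<in> Mfin I"
  shows "up I (fin I (V \<xi>0)) = {\<xi> \<in> boundary I. V \<xi> = V \<xi>0}"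
proof -
  have "up I (fin I (V \<xi>0)) = {\<xi> \<in> boundary I. gle I (V \<xi>0) \<xi>}"
    unfolding up_def cf_fin[OF assms(2)] ..
  also have "\<dots> = {\<xi> \<in> boundary I. V \<xi> = V \<xi>0}"
  proof -
    have "gle I (V \<xi>) \<xi>" if "\<xi> \<in> boundary I" for \<xi>
      using ast that unfolding AST_def by blast
    moreover have "V \<xi> = V \<xi>0" if "\<xi> \<in> boundary I" "gle I (V \<xi>0) \<xi>" for \<xi>
      using ast assms that unfolding AST_def by blast
    ultimately show ?thesis by (auto, metis)
  qed
  finally show ?thesis .
qed

lemma V_levels_subset: "V_levels V \<subseteq> up I ` heaps I"
  unfolding V_levels_def using fin_heaps by auto

lemma countable_V_levels: "countable (V_levels V)"
  using countable_subset[OF V_levels_subset] countable_heaps by blast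

lemma disjoint_V_levels: "disjoint (V_levels V)"
  unfolding V_levels_def disjoint_def using up_fin_AST by auto

lemma Union_V_levels: "\<Union>(V_levels V) = {\<xi> \<in> boundary I. V \<xi> \<in> Mfin I}"
  unfolding V_levels_def using up_fin_AST by auto

lemma FV_eq: "FV I V = sigma (boundary I) (V_levels V)"
  by (simp add: FV_def V_levels_def)

lemma V_levels_Pow: "V_levels V \<subseteq> Pow (boundary I)"
  using V_levels_subset up_Pow by blast

lemma sets_FV: "sets (FV I V) = sigma_sets (boundary I) (V_levels V)"
  unfolding FV_eq using V_levels_Pow by (rule sets_measure_of)

lemma V_level_eq_up:
  assumes "G \<in> V_levels V"
  shows "\<exists>u. G = up I (heap I u) \<and> (\<forall>\<xi>\<in>G. V \<xi> \<in> Mfin I \<and> fin I (V \<xi>) = heap I u)"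
proof -
  obtain \<xi>0 where \<xi>0: "\<xi>0 \<in> boundary I" "V \<xi>0 \<in> Mfin I" "G = up I (fin I (V \<xi>0))"
    using assms unfolding V_levels_def by blast
  obtain u where u: "fin I (V \<xi>0) = heap I u" using fin_heaps by (auto simp: heaps_def)
  have "V \<xi> \<in> Mfin I \<and> fin I (V \<xi>) = heap I u" if "\<xi> \<in> G" for \<xi>
  proof -
    have "V \<xi> = V \<xi>0" using that up_fin_AST[OF \<xi>0(1,2)] \<xi>0(3) by blast
    then show ?thesis using \<xi>0(2) u by simp
  qed
  then show ?thesis using \<xi>0(3) u by auto
qed

context
  fixes P assumes bern: "bernoulli I P"
begin

lemma V_levels_sets: "V_levels V \<subseteq> sets P"
  using V_levels_subset up_sets[OF bern] by blast

lemma subalgebra_FV: "subalgebra P (FV I V)"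
  unfolding subalgebra_def
proof
  show "space (FV I V) = space P"
    unfolding FV_eq space_measure_of[OF V_levels_Pow] using space_P[OF bern] ..
  show "sets (FV I V) \<subseteq> sets P"
    using sets_FV sets.sigma_sets_subset[OF V_levels_sets] space_P[OF bern] by simp
qed

lemma shifted_measurable:
  assumes \<psi>: "\<psi> \<in> borel_measurable (cyl_space I)"
  shows "(\<lambda>\<xi>. ennreal (shifted I V \<psi> \<xi>)) \<in> borel_measurable P"
proof (rule measurable_piecewise_restrict[where C = "insert (boundary I - \<Union>(V_levels V)) (V_levels V)"])
  show "countable (insert (boundary I - \<Union>(V_levels V)) (V_levels V))" using countable_V_levels by simp
  have "\<Union>(V_levels V) \<in> sets P"
    using V_levels_sets countable_V_levels by (intro sets.countable_Union) auto
  then have "boundary I - \<Union>(V_levels V) \<in> sets P" using space_P[OF bern] by (metis sets.compl_sets)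
  then have "\<Omega> \<in> sets P" if "\<Omega> \<in> insert (boundary I - \<Union>(V_levels V)) (V_levels V)" for \<Omega>
    using that V_levels_sets by blast
  then show "\<Omega> \<inter> space P \<in> sets P" if "\<Omega> \<in> insert (boundary I - \<Union>(V_levels V)) (V_levels V)" for \<Omega>
    using that by (simp add: sets.Int_space_eq2)
  show "space P \<subseteq> \<Union>(insert (boundary I - \<Union>(V_levels V)) (V_levels V))" using space_P[OF bern] by auto
next
  fix \<Omega> assume \<Omega>: "\<Omega> \<in> insert (boundary I - \<Union>(V_levels V)) (V_levels V)"
  show "(\<lambda>\<xi>. ennreal (shifted I V \<psi> \<xi>)) \<in> borel_measurable (restrict_space P \<Omega>)"
  proof (cases "\<Omega> \<in> V_levels V")
    case True
    then obtain u where u: "\<Omega> = up I (heap I u)" "\<forall>\<xi>\<in>\<Omega>. V \<xi> \<in> Mfin I \<and> fin I (V \<xi>) = heap I u"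
      using V_level_eq_up[OF True] by blast
    have "(\<lambda>\<xi>. \<psi> (minus_heap I \<xi> (heap I u))) \<in> borel_measurable (restrict_space P \<Omega>)"
      using measurable_compose[OF minus_heap_measurable[OF bern, of u] \<psi>] u(1) by simp
    then have meas: "(\<lambda>\<xi>. ennreal (\<psi> (minus_heap I \<xi> (heap I u)))) \<in> borel_measurable (restrict_space P \<Omega>)"
      by (rule measurable_compose[OF _ measurable_ennreal])
    have "\<And>\<xi>. \<xi> \<in> space (restrict_space P \<Omega>) \<Longrightarrow>
        ennreal (shifted I V \<psi> \<xi>) = ennreal (\<psi> (minus_heap I \<xi> (heap I u)))"
      using u(2) by (simp add: space_restrict_space shifted_def shift_def)
    then show ?thesis using meas by (rule measurable_cong[THEN iffD2])
  next
    case False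
    then have "\<Omega> = boundary I - \<Union>(V_levels V)" using \<Omega> by blast
    then have "\<And>\<xi>. \<xi> \<in> space (restrict_space P \<Omega>) \<Longrightarrow> ennreal (shifted I V \<psi> \<xi>) = 0"
      by (simp add: space_restrict_space shifted_def Union_V_levels)
    then show ?thesis by (rule measurable_cong[THEN iffD2]) measurable
  qed
qed

lemma nn_integral_shifted_V_level:
  assumes \<psi>: "\<psi> \<in> borel_measurable (cyl_space I)" and G: "G \<in> V_levels V"
  shows "(\<integral>\<^sup>+\<xi>\<in>G. ennreal (shifted I V \<psi> \<xi>) \<partial>P) = (\<integral>\<^sup>+\<xi>. ennreal (\<psi> \<xi>) \<partial>P) * emeasure P G"
proof -
  obtain u where u: "G = up I (heap I u)" "\<forall>\<xi>\<in>G. V \<xi> \<in> Mfin I \<and> fin I (V \<xi>) = heap I u"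
    using V_level_eq_up[OF G] by blast
  have "(\<integral>\<^sup>+\<xi>\<in>G. ennreal (shifted I V \<psi> \<xi>) \<partial>P)
      = (\<integral>\<^sup>+\<xi>\<in>up I (heap I u). ennreal (\<psi> (minus_heap I \<xi> (heap I u))) \<partial>P)"
    using u by (intro nn_integral_cong) (auto simp: shifted_def shift_def split: split_indicator)
  then show ?thesis using nn_integral_minus_heap[OF bern \<psi>] u(1) by (simp add: mult.commute)
qed

lemma nn_cond_exp_shifted:
  assumes \<psi>: "\<psi> \<in> borel_measurable (cyl_space I)"
  shows "AE \<xi> in P. V \<xi> \<in> Mfin I \<longrightarrow>
    nn_cond_exp P (FV I V) (\<lambda>\<zeta>. ennreal (shifted I V \<psi> \<zeta>)) \<xi> = (\<integral>\<^sup>+\<zeta>. ennreal (\<psi> \<zeta>) \<partial>P)"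
proof -
  interpret prob_space P by (rule prob_space_P[OF bern])
  have "AE \<xi> in P. \<xi> \<in> \<Union>(V_levels V) \<longrightarrow>
    nn_cond_exp P (FV I V) (\<lambda>\<zeta>. ennreal (shifted I V \<psi> \<zeta>)) \<xi> = (\<integral>\<^sup>+\<zeta>. ennreal (\<psi> \<zeta>) \<partial>P)"
  proof (rule nn_cond_exp_const_on_atoms[OF subalgebra_FV])
    show "sets (FV I V) = sigma_sets (space P) (V_levels V)" using sets_FV space_P[OF bern] by simp
    show "countable (V_levels V)" by (rule countable_V_levels)
    show "disjoint (V_levels V)" by (rule disjoint_V_levels)
    show "V_levels V \<subseteq> sets P" by (rule V_levels_sets)
    show "(\<lambda>\<zeta>. ennreal (shifted I V \<psi> \<zeta>)) \<in> borel_measurable P" by (rule shifted_measurable[OF \<psi>])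
    show "ennreal (shifted I V \<psi> \<xi>) = 0" if "\<xi> \<in> space P" "\<xi> \<notin> \<Union>(V_levels V)" for \<xi>
      using that space_P[OF bern] by (simp add: Union_V_levels shifted_def)
    show "(\<integral>\<^sup>+\<xi>\<in>G. ennreal (shifted I V \<psi> \<xi>) \<partial>P) = (\<integral>\<^sup>+\<xi>. ennreal (\<psi> \<xi>) \<partial>P) * emeasure P G"
      if "G \<in> V_levels V" for G
      using nn_integral_shifted_V_level[OF \<psi> that] .
  qed
  moreover have "AE \<xi> in P. \<xi> \<in> space P" by simp
  ultimately show ?thesis by eventually_elim (auto simp: Union_V_levels space_P[OF bern])
qed

end

end

end

text \<open>Since \<open>ennreal\<close> truncates negative values, the first part holds without the sign
  condition on \<open>\<psi>\<close>; the second follows from it applied to \<open>\<psi>\<close> and \<open>-\<psi>\<close>.\<close>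

theorem theorem1:
  fixes I :: "('a::finite \<times> 'a) set"
    and P :: "'a gheap measure"
    and V :: "'a gheap \<Rightarrow> 'a gheap"
    and \<psi> :: "'a gheap \<Rightarrow> real"
  assumes "CARD('a) \<ge> 2"
    and "sym I" and "irrefl I"
    and "\<forall>a b. (a, b) \<in> (- I)\<^sup>*"
    and "bernoulli I P"
    and "AST I V"
    and "\<psi> \<in> borel_measurable (cyl_space I)"
  shows "((\<forall>\<xi>\<in>boundary I. \<psi> \<xi> \<ge> 0) \<longrightarrow>
           (AE \<xi> in P. V \<xi> \<in> Mfin I \<longrightarrow>
              nn_cond_exp P (FV I V) (\<lambda>\<zeta>. ennreal (shifted I V \<psi> \<zeta>)) \<xi>
                = (\<integral>\<^sup>+ \<zeta>. ennreal (\<psi> \<zeta>) \<partial>P)))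
       \<and> (integrable P \<psi> \<longrightarrow>
           (AE \<xi> in P. V \<xi> \<in> Mfin I \<longrightarrow>
              real_cond_exp P (FV I V) (shifted I V \<psi>) \<xi> = (\<integral> \<zeta>. \<psi> \<zeta> \<partial>P)))"
proof -
  interpret heap_monoid I using assms(2,3) by unfold_locales
  note pos = nn_cond_exp_shifted[OF assms(6,5,7)]
  have "(\<lambda>\<zeta>. - \<psi> \<zeta>) \<in> borel_measurable (cyl_space I)" using assms(7) by measurable
  note neg = nn_cond_exp_shifted[OF assms(6,5) this]
  have real_cond_exp: "AE \<xi> in P. V \<xi> \<in> Mfin I \<longrightarrow>
      real_cond_exp P (FV I V) (shifted I V \<psi>) \<xi> = (\<integral> \<zeta>. \<psi> \<zeta> \<partial>P)" if "integrable P \<psi>"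
    using pos neg
  proof eventually_elim
    case (elim \<xi>)
    have neg_shifted: "(\<lambda>\<zeta>. ennreal (- shifted I V \<psi> \<zeta>)) = (\<lambda>\<zeta>. ennreal (shifted I V (\<lambda>\<zeta>. - \<psi> \<zeta>) \<zeta>))"
      by (simp add: shifted_def fun_eq_iff)
    show ?case
    proof
      assume "V \<xi> \<in> Mfin I"
      then show "real_cond_exp P (FV I V) (shifted I V \<psi>) \<xi> = (\<integral> \<zeta>. \<psi> \<zeta> \<partial>P)"
        using elim real_lebesgue_integral_def[OF that] unfolding real_cond_exp_def by (simp only: neg_shifted)
    qed
  qed
  show ?thesis using pos real_cond_exp by blast
qed

end
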